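(* Let $I=(0,1)$ and let $\Omega\subset\mathbb R^d$ be a bounded Lipschitz domain. Let $\mathbf D=\mathbf D^\top\in\mathbb R^{d\times d}$ be positive definite and $c\ge 0$, and set $a(\eta,\zeta):=\int_\Omega \mathbf D\nabla\eta\cdot\nabla\zeta+c\,\eta\zeta\,\mathrm d\vec x$ for $\eta,\zeta\in H^1_0(\Omega)$. Fix $p_t,p_{\vec x}\in\mathbb N$, a partition $\mathcal T_I$ of $I$ into subintervals and a conforming triangulation $\mathcal T_\Omega$ of $\Omega$. Let $X_t:=H^1(I)\cap\mathbb P^{-1}_{p_t}(\mathcal T_I)$ with Lagrange basis $\Phi_t=(\varphi_1,\dots,\varphi_{N_t})$, $X_{\vec x}:=H^1_0(\Omega)\cap\mathbb P^{-1}_{p_{\vec x}}(\mathcal T_\Omega)$ with Lagrange basis $\Phi_{\vec x}=(\psi_1,\dots,\psi_{N_{\vec x}})$, and $Y_t:=\mathbb P^{-1}_{p_t}(\mathcal T_I)$ with an $L_2(I)$-orthogonal basis $\Xi=(\xi_1,\dots,\xi_{M_t})$. Put $X^\delta:=X_t\otimes X_{\vec x}$, $Y^\delta:=Y_t\otimes X_{\vec x}$, and for $w\in X^\delta$, $v\in Y^\delta$ let $(Bw)(v):=\int_I \langle \partial_t w(t),v(t)\rangle_{L_2(\Omega)}+a(w(t),v(t))\,\mathrm dt$. Let $\mathbf O_{ij}:=\int_I\xi_j\xi_i$, let $\mathbf K_{\vec x}\in\mathbb R^{N_{\vec x}\times N_{\vec x}}$ be symmetric positive definite, $\mathbf K_Y:=\mathbf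 O^{-1}\otimes\mathbf K_{\vec x}$, and define $K_Y^\delta:(Y^\delta)'\to Y^\delta$ by $K_Y^\delta\ell:=\sum_{(j,l),(j',l')}(\mathbf K_Y)_{(j,l),(j',l')}\,\ell(\xi_{j'}\otimes\psi_{l'})\,\xi_j\otimes\psi_l$. For $u,w\in X^\delta$ let $(S^\delta u)(w):=(Bw)\big(K_Y^\delta((Bu)|_{Y^\delta})\big)+\langle u(0),w(0)\rangle_{L_2(\Omega)}$, and let $\mathbf S_{(i,k),(i',k')}:=(S^\delta(\varphi_{i'}\otimes\psi_{k'}))(\varphi_i\otimes\psi_k)$. Define $(\mathbf L)_{ij}:=\int_I\varphi_j'\varphi_i$, $(\mathbf M_t)_{ij}:=\int_I\varphi_j\varphi_i$, $(\mathbf A_t)_{ij}:=\int_I\varphi_j'\varphi_i'$, $(\mathbf\Gamma_0)_{ij}:=\varphi_i(0)\varphi_j(0)$, $(\mathbf M_{\vec x})_{kl}:=\int_\Omega\psi_l\psi_k$ and $(\mathbf A_{\vec x})_{kl}:=\int_\Omega\mathbf D\nabla\psi_l\cdot\nabla\psi_k+c\,\psi_l\psi_k$. Then \[ \mathbf S=\mathbf A_t\otimes(\mathbf M_{\vec x}\mathbf K_{\vec x}\mathbf M_{\vec x})+\mathbf M_t\otimes(\mathbf A_{\vec x}\mathbf K_{\vec x}\mathbf A_{\vec x})+\mathbf L^\top\otimes(\mathbf M_{\vec x}\mathbf K_{\vec x}\mathbf A_{\vec x})+\mathbf L\otimes(\mathbf A_{\vec x}\mathbf K_{\vec x}\mathbf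 M_{\vec x})+\mathbf\Gamma_0\otimes\mathbf M_{\vec x}. \] In particular, $\mathbf S$ does not depend on the choice of $Y_t$ (among spaces containing $X_t$ and $\tfrac{\mathrm d}{\mathrm dt}X_t$) nor on the choice of its orthogonal basis $\Xi$.
   Context: $\mathbb P^{-1}_p(\mathcal T)$ denotes the space of (possibly discontinuous) piecewise polynomials of degree at most $p$ on the partition $\mathcal T$; note $X_t\subset Y_t$ and $\tfrac{\mathrm d}{\mathrm dt}X_t\subset Y_t$. Kronecker products use index pairs with the time index outer: $(\mathbf P\otimes\mathbf Q)_{(i,k),(j,l)}=\mathbf P_{ij}\mathbf Q_{kl}$. *)

theory Defs
  imports "HOL-Analysis.Analysis" "HOL-Computational_Algebra.Polynomial"
begin

definition interval_partition :: "real list \<Rightarrow> bool" where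
  "interval_partition ts \<longleftrightarrow> length ts \<ge> 2 \<and> sorted_wrt (<) ts \<and> hd ts = 0 \<and> last ts = 1"

definition pw_poly_1d :: "nat \<Rightarrow> real list \<Rightarrow> (real \<Rightarrow> real) \<Rightarrow> bool" where
  "pw_poly_1d p ts f \<longleftrightarrow>
     (\<forall>m < length ts - 1. \<exists>q :: real poly. degree q \<le> p \<and>
        (\<forall>t \<in> {ts!m <..< ts!(Suc m)}. f t = poly q t))"

definition Yt_space :: "nat \<Rightarrow> real list \<Rightarrow> (real \<Rightarrow> real) set" where
  "Yt_space p ts = {f. pw_poly_1d p ts f}"

text \<open>X_t = H^1(I) \<inter> P^{-1}_p(T_I), i.e. piecewise polynomials whose representative is
  continuous on the closed interval [0,1] (the continuous representative is used so that
  point values, e.g. at t=0, are meaningful).\<close>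
definition Xt_space :: "nat \<Rightarrow> real list \<Rightarrow> (real \<Rightarrow> real) set" where
  "Xt_space p ts = {f. pw_poly_1d p ts f \<and> continuous_on {0..1} f}"

definition l2I :: "(real \<Rightarrow> real) \<Rightarrow> (real \<Rightarrow> real) \<Rightarrow> real" where
  "l2I f g = (LINT t:{0<..<1}|lborel. f t * g t)"

definition L2I :: "(real \<Rightarrow> real) set" where
  "L2I = {f. set_borel_measurable lborel {0<..<1} f \<and> set_integrable lborel {0<..<1} (\<lambda>t. (f t)\<^sup>2)}"

definition L2I_orthogonal_basis :: "(real \<Rightarrow> real) set \<Rightarrow> nat \<Rightarrow> (nat \<Rightarrow> real \<Rightarrow> real) \<Rightarrow> bool" where
  "L2I_orthogonal_basis Y M \<xi> \<longleftrightarrow>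
     (\<forall>j<M. \<xi> j \<in> Y) \<and>
     (\<forall>j<M. l2I (\<xi> j) (\<xi> j) \<noteq> 0) \<and>
     (\<forall>j<M. \<forall>j'<M. j \<noteq> j' \<longrightarrow> l2I (\<xi> j) (\<xi> j') = 0) \<and>
     (\<forall>f\<in>Y. \<exists>a. AE t in lborel. t \<in> {0<..<1} \<longrightarrow> f t = (\<Sum>j<M. a j * \<xi> j t))"

definition lagrange_basis :: "'a set \<Rightarrow> ('a \<Rightarrow> real) set \<Rightarrow> nat \<Rightarrow> (nat \<Rightarrow> 'a \<Rightarrow> real) \<Rightarrow> bool" where
  "lagrange_basis S X N \<phi> \<longleftrightarrow>
     (\<forall>i<N. \<phi> i \<in> X) \<and>
     (\<exists>\<tau>. (\<forall>j<N. \<tau> j \<in> S) \<and> (\<forall>i<N. \<forall>j<N. \<phi> i (\<tau> j) = (if i = j then 1 else 0))) \<and>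
     (\<forall>f\<in>X. \<exists>a. \<forall>x\<in>S. f x = (\<Sum>i<N. a i * \<phi> i x))"

definition lipschitz_domain :: "(real^'n) set \<Rightarrow> bool" where
  "lipschitz_domain \<Omega> \<longleftrightarrow> open \<Omega> \<and> connected \<Omega> \<and> \<Omega> \<noteq> {} \<and>
     (\<forall>x\<in>frontier \<Omega>. \<exists>r>0. \<exists>e (g :: real^'n \<Rightarrow> real) L.
        norm e = 1 \<and> L-lipschitz_on UNIV g \<and> (\<forall>y s. g (y + s *\<^sub>R e) = g y) \<and>
        \<Omega> \<inter> ball x r = {y \<in> ball x r. y \<bullet> e < g y})"

definition conforming_triangulation :: "(real^'n) set \<Rightarrow> (real^'n) set set \<Rightarrow> bool" where
  "conforming_triangulation \<Omega> T \<longleftrightarrow> finite T \<and>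
     (\<forall>K\<in>T. int CARD('n) simplex K) \<and> \<Union>T = closure \<Omega> \<and>
     (\<forall>K\<in>T. \<forall>K'\<in>T. (K \<inter> K') face_of K \<and> (K \<inter> K') face_of K')"

definition mpoly_fun :: "nat \<Rightarrow> (real^'n \<Rightarrow> real) \<Rightarrow> bool" where
  "mpoly_fun p q \<longleftrightarrow> (\<exists>a :: ('n \<Rightarrow> nat) \<Rightarrow> real. \<forall>x.
     q x = (\<Sum>\<alpha>\<in>{\<alpha>. sum \<alpha> UNIV \<le> p}. a \<alpha> * (\<Prod>i\<in>UNIV. (x $ i) ^ \<alpha> i)))"

definition pw_poly_T :: "nat \<Rightarrow> (real^'n) set set \<Rightarrow> (real^'n \<Rightarrow> real) \<Rightarrow> bool" where
  "pw_poly_T p T f \<longleftrightarrow> (\<forall>K\<in>T. \<exists>q. mpoly_fun p q \<and> (\<forall>x\<in>interior K. f x = q x))"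

text \<open>X_x = H^1_0(\<Omega>) \<inter> P^{-1}_p(T_\<Omega>): for a conforming triangulation these are exactly the
  piecewise polynomials that are continuous on the closure of \<Omega> and vanish on its boundary
  (continuous representative).\<close>
definition Xx_space :: "(real^'n) set \<Rightarrow> (real^'n) set set \<Rightarrow> nat \<Rightarrow> (real^'n \<Rightarrow> real) set" where
  "Xx_space \<Omega> T p = {f. pw_poly_T p T f \<and> continuous_on (closure \<Omega>) f \<and> (\<forall>x\<in>frontier \<Omega>. f x = 0)}"

text \<open>Gradient (vector of partial derivatives; for the functions at hand it coincides
  a.e. with the weak gradient).\<close>
definition grad :: "(real^'n \<Rightarrow> real) \<Rightarrow> real^'n \<Rightarrow> real^'n" where
  "grad f x = (\<chi> i. deriv (\<lambda>s. f (x + s *\<^sub>R axis i 1)) 0)"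

definition l2O :: "(real^'n) set \<Rightarrow> (real^'n \<Rightarrow> real) \<Rightarrow> (real^'n \<Rightarrow> real) \<Rightarrow> real" where
  "l2O \<Omega> f g = (LINT x:\<Omega>|lborel. f x * g x)"

definition aform :: "(real^'n) set \<Rightarrow> real^'n^'n \<Rightarrow> real \<Rightarrow> (real^'n \<Rightarrow> real) \<Rightarrow> (real^'n \<Rightarrow> real) \<Rightarrow> real" where
  "aform \<Omega> D c \<eta> \<zeta> = (LINT x:\<Omega>|lborel. (D *v grad \<eta> x) \<bullet> grad \<zeta> x + c * \<eta> x * \<zeta> x)"

definition tens :: "(real \<Rightarrow> real) \<Rightarrow> (real^'n \<Rightarrow> real) \<Rightarrow> real \<Rightarrow> real^'n \<Rightarrow> real" where
  "tens f g = (\<lambda>t x. f t * g x)"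

definition Bform :: "(real^'n) set \<Rightarrow> real^'n^'n \<Rightarrow> real \<Rightarrow>
    (real \<Rightarrow> real^'n \<Rightarrow> real) \<Rightarrow> (real \<Rightarrow> real^'n \<Rightarrow> real) \<Rightarrow> real" where
  "Bform \<Omega> D c w v = (LINT t:{0<..<1}|lborel.
      l2O \<Omega> (\<lambda>x. deriv (\<lambda>s. w s x) t) (v t) + aform \<Omega> D c (w t) (v t))"

text \<open>Kronecker product with index pairs, time index outer.\<close>
definition kron :: "(nat \<Rightarrow> nat \<Rightarrow> real) \<Rightarrow> (nat \<Rightarrow> nat \<Rightarrow> real) \<Rightarrow> nat \<times> nat \<Rightarrow> nat \<times> nat \<Rightarrow> real" where
  "kron P Q = (\<lambda>(i, k) (j, l). P i j * Q k l)"

definition mmul :: "nat \<Rightarrow> (nat \<Rightarrow> nat \<Rightarrow> real) \<Rightarrow> (nat \<Rightarrow> nat \<Rightarrow> real) \<Rightarrow> nat \<Rightarrow> nat \<Rightarrow> real" where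
  "mmul n A B = (\<lambda>i j. \<Sum>m<n. A i m * B m j)"

definition mtrans :: "(nat \<Rightarrow> nat \<Rightarrow> real) \<Rightarrow> nat \<Rightarrow> nat \<Rightarrow> real" where
  "mtrans A = (\<lambda>i j. A j i)"

definition KYdelta :: "nat \<Rightarrow> nat \<Rightarrow> (nat \<Rightarrow> nat \<Rightarrow> real) \<Rightarrow> (nat \<Rightarrow> nat \<Rightarrow> real) \<Rightarrow>
    (nat \<Rightarrow> real \<Rightarrow> real) \<Rightarrow> (nat \<Rightarrow> real^'n \<Rightarrow> real) \<Rightarrow>
    ((real \<Rightarrow> real^'n \<Rightarrow> real) \<Rightarrow> real) \<Rightarrow> real \<Rightarrow> real^'n \<Rightarrow> real" where
  "KYdelta M Nx Oinv Kx \<xi> \<psi> ell = (\<lambda>t x.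
     \<Sum>j<M. \<Sum>l<Nx. \<Sum>j'<M. \<Sum>l'<Nx.
        kron Oinv Kx (j, l) (j', l') * ell (tens (\<xi> j') (\<psi> l')) * tens (\<xi> j) (\<psi> l) t x)"

definition Sdelta :: "(real^'n) set \<Rightarrow> real^'n^'n \<Rightarrow> real \<Rightarrow> nat \<Rightarrow> nat \<Rightarrow>
    (nat \<Rightarrow> nat \<Rightarrow> real) \<Rightarrow> (nat \<Rightarrow> nat \<Rightarrow> real) \<Rightarrow>
    (nat \<Rightarrow> real \<Rightarrow> real) \<Rightarrow> (nat \<Rightarrow> real^'n \<Rightarrow> real) \<Rightarrow>
    (real \<Rightarrow> real^'n \<Rightarrow> real) \<Rightarrow> (real \<Rightarrow> real^'n \<Rightarrow> real) \<Rightarrow> real" where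
  "Sdelta \<Omega> D c M Nx Oinv Kx \<xi> \<psi> u w =
     Bform \<Omega> D c w (KYdelta M Nx Oinv Kx \<xi> \<psi> (\<lambda>v. Bform \<Omega> D c u v)) + l2O \<Omega> (u 0) (w 0)"

end

theory Submission
  imports Defs
begin

text \<open>Tested with tensor products, the integrand of \<open>B\<close> separates:
  \<open>B(\<phi>\<^sub>i \<otimes> \<psi>\<^sub>k)(\<xi>\<^sub>j \<otimes> \<psi>\<^sub>l) = (\<phi>\<^sub>i', \<xi>\<^sub>j) M\<^sub>k\<^sub>l + (\<phi>\<^sub>i, \<xi>\<^sub>j) A\<^sub>k\<^sub>l\<close> with \<open>L\<^sub>2(I)\<close> products
  in time and mass/stiffness entries in space. Inserting this into \<open>K\<^sub>Y = O\<^sup>-\<^sup>1 \<otimes> K\<^sub>x\<close>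
  splits each entry of \<open>S\<close> into four products of a time factor
  \<open>(f, \<xi>)\<^sup>T O\<^sup>-\<^sup>1 (g, \<xi>)\<close> and a space factor such as \<open>M K\<^sub>x A\<close>. Since
  \<open>f, g \<in> {\<phi>\<^sub>i, \<phi>\<^sub>i'}\<close> lie in \<open>Y\<^sub>t = span \<Xi>\<close>, Parseval's identity for the orthogonal
  basis \<open>\<Xi>\<close> collapses every time factor to \<open>(f, g)\<close>, which gives \<open>A\<^sub>t\<close>, \<open>M\<^sub>t\<close>, \<open>L\<close>
  and \<open>L\<^sup>T\<close> whatever \<open>Y\<^sub>t\<close> and \<open>\<Xi>\<close> are. The rest is analysis bookkeeping: all functions
  are piecewise polynomial, so the integrands are bounded and (via difference quotients along
  rational increments) Borel measurable, and the forms are bilinear on the discrete spaces.\<close>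

section \<open>Measurability of directional derivatives\<close>

text \<open>Cauchy criterion for the difference quotient at 0 over rational increments only: these are
  countably many, so the condition is Borel in a parameter of \<open>g\<close>.\<close>
definition rat_diff_quot_Cauchy :: "(real \<Rightarrow> bool) \<Rightarrow> (real \<Rightarrow> real) \<Rightarrow> bool" where
  "rat_diff_quot_Cauchy P g \<longleftrightarrow> (\<forall>n. \<exists>m. \<forall>q q' :: rat.
     real_of_rat q \<noteq> 0 \<and> \<bar>real_of_rat q\<bar> < inverse (real (Suc m)) \<and> P (real_of_rat q) \<and>
     real_of_rat q' \<noteq> 0 \<and> \<bar>real_of_rat q'\<bar> < inverse (real (Suc m)) \<and> P (real_of_rat q') \<longrightarrow>
     \<bar>(g (real_of_rat q) - g 0) / real_of_rat q - (g (real_of_rat q') - g 0) / real_of_rat q'\<bar> \<le> inverse (real (Suc n)))"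

lemma DERIV_imp_rat_diff_quot_Cauchy:
  assumes "(g has_real_derivative D) (at 0)"
  shows "rat_diff_quot_Cauchy P g"
  unfolding rat_diff_quot_Cauchy_def
proof
  fix n
  define Q where "Q = (\<lambda>s. (g s - g 0) / s)"
  have "Q \<midarrow>0\<rightarrow> D" using assms unfolding DERIV_def Q_def by simp
  from LIM_D[OF this, of "inverse (real (Suc n)) / 2"] obtain r where r: "r > 0"
    and near: "\<And>s. s \<noteq> 0 \<Longrightarrow> \<bar>s\<bar> < r \<Longrightarrow> \<bar>Q s - D\<bar> < inverse (real (Suc n)) / 2"
    by auto
  obtain m where m: "inverse (real (Suc m)) < r" using reals_Archimedean[OF r] by blast
  show "\<exists>m. \<forall>q q' :: rat.
     real_of_rat q \<noteq> 0 \<and> \<bar>real_of_rat q\<bar> < inverse (real (Suc m)) \<and> P (real_of_rat q) \<and>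
     real_of_rat q' \<noteq> 0 \<and> \<bar>real_of_rat q'\<bar> < inverse (real (Suc m)) \<and> P (real_of_rat q') \<longrightarrow>
     \<bar>(g (real_of_rat q) - g 0) / real_of_rat q - (g (real_of_rat q') - g 0) / real_of_rat q'\<bar> \<le> inverse (real (Suc n))"
  proof (intro exI[of _ m] allI impI)
    fix q q' :: rat
    assume "real_of_rat q \<noteq> 0 \<and> \<bar>real_of_rat q\<bar> < inverse (real (Suc m)) \<and> P (real_of_rat q) \<and>
      real_of_rat q' \<noteq> 0 \<and> \<bar>real_of_rat q'\<bar> < inverse (real (Suc m)) \<and> P (real_of_rat q')"
    with m have "\<bar>Q (real_of_rat q) - D\<bar> < inverse (real (Suc n)) / 2"
      and "\<bar>Q (real_of_rat q') - D\<bar> < inverse (real (Suc n)) / 2"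
      by (meson near order.strict_trans)+
    then show "\<bar>(g (real_of_rat q) - g 0) / real_of_rat q - (g (real_of_rat q') - g 0) / real_of_rat q'\<bar> \<le> inverse (real (Suc n))"
      unfolding Q_def by linarith
  qed
qed

text \<open>Continuity of the difference quotient away from 0 lets every increment be replaced by a
  nearby rational one, so the rational Cauchy condition is the Cauchy criterion for the limit
  at 0.\<close>
lemma rat_diff_quot_Cauchy_imp_DERIV:
  fixes g :: "real \<Rightarrow> real"
  assumes cc: "rat_diff_quot_Cauchy P g" and "\<rho> > 0" and P: "\<And>s. \<bar>s\<bar> < \<rho> \<Longrightarrow> P s"
    and cont: "\<And>s. s \<noteq> 0 \<Longrightarrow> \<bar>s\<bar> < \<rho> \<Longrightarrow> isCont g s"
  shows "\<exists>D. (g has_real_derivative D) (at 0)"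
proof -
  define Q where "Q = (\<lambda>s. (g s - g 0) / s)"
  have "cauchy_filter (filtermap Q (at 0))"
    unfolding cauchy_filter_metric_filtermap
  proof (intro allI impI)
    fix e :: real
    assume "e > 0"
    then obtain n where n: "inverse (real (Suc n)) < e / 3" using reals_Archimedean[of "e / 3"] by auto
    obtain m where m: "\<And>q q' :: rat.
       real_of_rat q \<noteq> 0 \<Longrightarrow> \<bar>real_of_rat q\<bar> < inverse (real (Suc m)) \<Longrightarrow> P (real_of_rat q) \<Longrightarrow>
       real_of_rat q' \<noteq> 0 \<Longrightarrow> \<bar>real_of_rat q'\<bar> < inverse (real (Suc m)) \<Longrightarrow> P (real_of_rat q') \<Longrightarrow>
       \<bar>Q (real_of_rat q) - Q (real_of_rat q')\<bar> \<le> inverse (real (Suc n))"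
      using cc unfolding rat_diff_quot_Cauchy_def Q_def by blast
    define \<delta> where "\<delta> = min (inverse (real (Suc m))) \<rho>"
    have "\<delta> > 0" using \<open>\<rho> > 0\<close> unfolding \<delta>_def by simp
    have rat_near: "\<exists>q :: rat. real_of_rat q \<noteq> 0 \<and> \<bar>real_of_rat q\<bar> < \<delta> \<and> \<bar>Q (real_of_rat q) - Q s\<bar> < e / 3"
      if s: "s \<noteq> 0" "\<bar>s\<bar> < \<delta>" for s
    proof -
      have "isCont Q s" unfolding Q_def using cont[of s] s \<delta>_def by (auto intro!: continuous_intros)
      then obtain \<eta> where "\<eta> > 0" and \<eta>: "\<And>y. \<bar>y - s\<bar> < \<eta> \<Longrightarrow> \<bar>Q y - Q s\<bar> < e / 3"
        using \<open>e > 0\<close> unfolding continuous_at_eps_delta dist_real_def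
        by (metis divide_pos_pos zero_less_numeral)
      have "0 < min \<eta> (min (\<delta> - \<bar>s\<bar>) \<bar>s\<bar>)" using \<open>\<eta> > 0\<close> s by simp
      then obtain r where "r \<in> \<rat>" "s < r" "r < s + min \<eta> (min (\<delta> - \<bar>s\<bar>) \<bar>s\<bar>)"
        using Rats_dense_in_real[of s] by (metis less_add_same_cancel1)
      moreover from this obtain q where "r = real_of_rat q" using Rats_cases by blast
      ultimately show ?thesis using \<eta>[of r] by (intro exI[of _ q]) (auto simp: abs_if split: if_splits)
    qed
    show "\<exists>R. eventually R (at 0) \<and> (\<forall>s s'. R s \<and> R s' \<longrightarrow> dist (Q s) (Q s') < e)"
    proof (intro exI conjI allI impI)
      show "eventually (\<lambda>s. s \<noteq> 0 \<and> \<bar>s\<bar> < \<delta>) (at (0::real))"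
        using \<open>\<delta> > 0\<close> by (auto simp: eventually_at dist_real_def)
      fix s s' assume "(s \<noteq> 0 \<and> \<bar>s\<bar> < \<delta>) \<and> (s' \<noteq> 0 \<and> \<bar>s'\<bar> < \<delta>)"
      then obtain q q' :: rat where q: "real_of_rat q \<noteq> 0" "\<bar>real_of_rat q\<bar> < \<delta>" "\<bar>Q (real_of_rat q) - Q s\<bar> < e / 3"
        and q': "real_of_rat q' \<noteq> 0" "\<bar>real_of_rat q'\<bar> < \<delta>" "\<bar>Q (real_of_rat q') - Q s'\<bar> < e / 3"
        using rat_near by meson
      have "\<bar>Q (real_of_rat q) - Q (real_of_rat q')\<bar> \<le> inverse (real (Suc n))"
        using q q' P by (intro m) (auto simp: \<delta>_def)
      with q q' n show "dist (Q s) (Q s') < e" unfolding dist_real_def by linarith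
    qed
  qed
  moreover have "filtermap Q (at 0) \<noteq> bot" by (simp add: filtermap_bot_iff)
  ultimately obtain L where "filtermap Q (at 0) \<le> nhds L"
    using cauchy_filter_complete_converges[OF _ complete_UNIV] by auto
  then have "(Q \<longlongrightarrow> L) (at 0)" by (simp add: filterlim_def)
  then show ?thesis unfolding DERIV_def Q_def by auto
qed

lemma directionally_differentiable_iff_rat_diff_quot_Cauchy:
  fixes f :: "'a::real_normed_vector \<Rightarrow> real"
  assumes U: "open U" and f: "continuous_on U f" and x: "x \<in> U"
  shows "(\<exists>D. ((\<lambda>s. f (x + s *\<^sub>R e)) has_real_derivative D) (at 0)) \<longleftrightarrow>
    rat_diff_quot_Cauchy (\<lambda>s. x + s *\<^sub>R e \<in> U) (\<lambda>s. f (x + s *\<^sub>R e))"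
proof
  assume cc: "rat_diff_quot_Cauchy (\<lambda>s. x + s *\<^sub>R e \<in> U) (\<lambda>s. f (x + s *\<^sub>R e))"
  obtain r where "r > 0" "ball x r \<subseteq> U" using U x open_contains_ball by blast
  have "norm e + 1 > 0" using norm_ge_zero[of e] by linarith
  define \<rho> where "\<rho> = r / (norm e + 1)"
  have line_in_U: "x + s *\<^sub>R e \<in> U" if "\<bar>s\<bar> < \<rho>" for s
  proof -
    have "norm (s *\<^sub>R e) \<le> \<bar>s\<bar> * (norm e + 1)" by (simp add: mult_left_mono)
    also have "\<dots> < r" using that unfolding \<rho>_def pos_less_divide_eq[OF \<open>norm e + 1 > 0\<close>] .
    finally show ?thesis using \<open>ball x r \<subseteq> U\<close> by (auto simp: dist_norm)
  qed
  show "\<exists>D. ((\<lambda>s. f (x + s *\<^sub>R e)) has_real_derivative D) (at 0)"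
  proof (rule rat_diff_quot_Cauchy_imp_DERIV[OF cc, where \<rho>=\<rho>])
    show "\<rho> > 0" using \<open>r > 0\<close> \<open>norm e + 1 > 0\<close> unfolding \<rho>_def by simp
    show "x + s *\<^sub>R e \<in> U" if "\<bar>s\<bar> < \<rho>" for s using line_in_U[OF that] .
    show "isCont (\<lambda>s. f (x + s *\<^sub>R e)) s" if "s \<noteq> 0" "\<bar>s\<bar> < \<rho>" for s
    proof (rule isCont_o2[where g=f])
      show "isCont f (x + s *\<^sub>R e)"
        using line_in_U[OF that(2)] U f continuous_on_eq_continuous_at by blast
    qed (intro continuous_intros)
  qed
qed (auto intro: DERIV_imp_rat_diff_quot_Cauchy)

lemma borel_measurable_indicator_mult_continuous_on:
  fixes h :: "'a::topological_space \<Rightarrow> real"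
  assumes "open V" "continuous_on V h"
  shows "(\<lambda>x. indicator V x * h x) \<in> borel_measurable borel"
  using borel_measurable_continuous_on_indicator[OF borel_open[OF assms(1)] assms(2)] by simp

lemma open_vimage_translation:
  fixes e :: "'a::real_normed_vector"
  assumes "open U"
  shows "open ((\<lambda>x. x + c *\<^sub>R e) -` U)"
  by (rule open_vimage[OF assms]) (intro continuous_intros)

lemma continuous_on_translate:
  fixes e :: "'a::real_normed_vector"
  assumes "continuous_on U f"
  shows "continuous_on ((\<lambda>x. x + c *\<^sub>R e) -` U) (\<lambda>x. f (x + c *\<^sub>R e))"
  by (rule continuous_on_compose2[OF assms]) (intro continuous_intros, auto)

lemma sets_borel_directionally_differentiable:
  fixes f :: "'a::euclidean_space \<Rightarrow> real"
  assumes U: "open U" and f: "continuous_on U f"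
  shows "{x \<in> U. \<exists>D. ((\<lambda>s. f (x + s *\<^sub>R e)) has_real_derivative D) (at 0)} \<in> sets borel"
proof -
  let ?V = "\<lambda>c. (\<lambda>x. x + c *\<^sub>R e) -` U"
  define H where "H q q' x = indicator (?V (real_of_rat q) \<inter> ?V (real_of_rat q') \<inter> U) x *
      ((f (x + real_of_rat q *\<^sub>R e) - f x) / real_of_rat q - (f (x + real_of_rat q' *\<^sub>R e) - f x) / real_of_rat q')"
    for q q' :: rat and x
  have shifted: "continuous_on ((\<lambda>x. x + c *\<^sub>R e) -` U) (\<lambda>x. f (x + c *\<^sub>R e))" for c
    using f by (rule continuous_on_translate)
  have [measurable]: "H q q' \<in> borel_measurable borel" for q q'
    unfolding H_def divide_inverse
    by (intro borel_measurable_indicator_mult_continuous_on open_Int open_vimage_translation U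
        continuous_intros continuous_on_subset[OF shifted] continuous_on_subset[OF f]) auto
  have [measurable]: "U \<in> sets borel" using U by (rule borel_open)
  have "{x \<in> U. \<exists>D. ((\<lambda>s. f (x + s *\<^sub>R e)) has_real_derivative D) (at 0)} =
    {x \<in> U. \<forall>n. \<exists>m. \<forall>q q' :: rat.
     real_of_rat q \<noteq> 0 \<and> \<bar>real_of_rat q\<bar> < inverse (real (Suc m)) \<and> x + real_of_rat q *\<^sub>R e \<in> U \<and>
     real_of_rat q' \<noteq> 0 \<and> \<bar>real_of_rat q'\<bar> < inverse (real (Suc m)) \<and> x + real_of_rat q' *\<^sub>R e \<in> U \<longrightarrow>
     \<bar>H q q' x\<bar> \<le> inverse (real (Suc n))}"
    using directionally_differentiable_iff_rat_diff_quot_Cauchy[OF U f]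
    by (intro Collect_cong conj_cong refl) (simp add: rat_diff_quot_Cauchy_def H_def)
  also have "\<dots> \<in> sets borel" by measurable
  finally show ?thesis .
qed

text \<open>Off the Borel set where the directional derivative exists, \<open>deriv\<close> is the junk
  constant \<open>SOME D. False\<close>; on it, the derivative is the pointwise limit of the difference
  quotients with step \<open>1 / (n + 1)\<close>, each continuous on an open set.\<close>
lemma borel_measurable_directional_deriv:
  fixes f :: "'a::euclidean_space \<Rightarrow> real"
  assumes U: "open U" and f: "continuous_on U f"
  shows "(\<lambda>x. indicator U x * deriv (\<lambda>s. f (x + s *\<^sub>R e)) 0) \<in> borel_measurable borel"
proof -
  let ?V = "\<lambda>c. (\<lambda>x. x + c *\<^sub>R e) -` U"
  let ?h = "\<lambda>n. inverse (real (Suc n))"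
  define E where "E = {x \<in> U. \<exists>D. ((\<lambda>s. f (x + s *\<^sub>R e)) has_real_derivative D) (at 0)}"
  have [measurable]: "E \<in> sets borel"
    unfolding E_def using U f by (rule sets_borel_directionally_differentiable)
  have [measurable]: "U \<in> sets borel" using U by (rule borel_open)
  define G where "G n x = (if x \<in> E
      then indicator (?V (?h n) \<inter> U) x * ((f (x + ?h n *\<^sub>R e) - f x) / ?h n)
      else indicator U x * (SOME D::real. False))" for n x
  have shifted: "continuous_on ((\<lambda>x. x + c *\<^sub>R e) -` U) (\<lambda>x. f (x + c *\<^sub>R e))" for c
    using f by (rule continuous_on_translate)
  have [measurable]: "(\<lambda>x. indicator (?V (?h n) \<inter> U) x * ((f (x + ?h n *\<^sub>R e) - f x) / ?h n))
      \<in> borel_measurable borel" for n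
    by (intro borel_measurable_indicator_mult_continuous_on open_Int open_vimage_translation U
        continuous_intros continuous_on_subset[OF shifted] continuous_on_subset[OF f]) auto
  have "G n \<in> borel_measurable borel" for n
    unfolding G_def by measurable
  moreover have "(\<lambda>n. G n x) \<longlonglongrightarrow> indicator U x * deriv (\<lambda>s. f (x + s *\<^sub>R e)) 0" for x
  proof (cases "x \<in> E")
    case False
    then have "x \<in> U \<Longrightarrow> deriv (\<lambda>s. f (x + s *\<^sub>R e)) 0 = (SOME D::real. False)"
      unfolding E_def deriv_def by simp
    then show ?thesis using False by (simp add: G_def indicator_def)
  next
    case True
    then obtain D where D: "((\<lambda>s. f (x + s *\<^sub>R e)) has_real_derivative D) (at 0)" and "x \<in> U"
      unfolding E_def by blast
    have "(\<lambda>s. (f (x + s *\<^sub>R e) - f x) / s) \<midarrow>0\<rightarrow> D" using D unfolding DERIV_def by simp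
    then have "(\<lambda>n. (f (x + ?h n *\<^sub>R e) - f x) / ?h n) \<longlonglongrightarrow> D"
      by (rule tendsto_compose_eventually[OF _ LIMSEQ_inverse_real_of_nat]) simp
    moreover have "eventually (\<lambda>n. x + ?h n *\<^sub>R e \<in> U) sequentially"
    proof -
      have "(\<lambda>n. x + ?h n *\<^sub>R e) \<longlonglongrightarrow> x + 0 *\<^sub>R e"
        by (intro tendsto_intros LIMSEQ_inverse_real_of_nat)
      then show ?thesis using U \<open>x \<in> U\<close> by (simp add: topological_tendstoD)
    qed
    then have "eventually (\<lambda>n. G n x = (f (x + ?h n *\<^sub>R e) - f x) / ?h n) sequentially"
      by eventually_elim (use True \<open>x \<in> U\<close> in \<open>simp add: G_def\<close>)
    ultimately show ?thesis using D \<open>x \<in> U\<close> by (simp add: tendsto_cong DERIV_imp_deriv)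
  qed
  ultimately show ?thesis by (rule borel_measurable_LIMSEQ_real[rotated])
qed

lemma set_integrable_sum:
  fixes f :: "'i \<Rightarrow> 'a \<Rightarrow> real"
  assumes "\<And>i. i \<in> S \<Longrightarrow> set_integrable M A (f i)"
  shows "set_integrable M A (\<lambda>x. \<Sum>i\<in>S. f i x)"
  using assms unfolding set_integrable_def by (simp add: sum_distrib_left integrable_sum)

lemma set_integral_sum:
  fixes f :: "'i \<Rightarrow> 'a \<Rightarrow> real"
  assumes "\<And>i. i \<in> S \<Longrightarrow> set_integrable M A (f i)"
  shows "(LINT x:A|M. (\<Sum>i\<in>S. f i x)) = (\<Sum>i\<in>S. LINT x:A|M. f i x)"
  using assms unfolding set_integrable_def set_lebesgue_integral_def
  by (simp add: sum_distrib_left integral_sum)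

lemma set_integrable_bounded:
  fixes h :: "'a::euclidean_space \<Rightarrow> real"
  assumes "A \<in> sets borel" "bounded A" "(\<lambda>x. indicator A x * h x) \<in> borel_measurable borel"
    and "AE x in lborel. x \<in> A \<longrightarrow> \<bar>h x\<bar> \<le> C"
  shows "set_integrable lborel A h"
proof (rule set_integrable_bound[where f="\<lambda>x. C"])
  have "integrable lborel (indicator A :: _ \<Rightarrow> real)"
    using assms(1) emeasure_bounded_finite[OF assms(2)] by auto
  then show "set_integrable lborel A (\<lambda>x. C)"
    unfolding set_integrable_def using integrable_mult_left[of C lborel "indicator A"] by simp
  show "set_borel_measurable lborel A h"
    using assms(3) unfolding set_borel_measurable_def by simp
  show "AE x in lborel. x \<in> A \<longrightarrow> norm (h x) \<le> norm C"
    using assms(4) by eventually_elim auto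
qed

lemma set_integral_cong_AE:
  fixes f g :: "'a \<Rightarrow> real"
  assumes "(\<lambda>x. indicator A x * f x) \<in> borel_measurable M" "(\<lambda>x. indicator A x * g x) \<in> borel_measurable M"
    and "AE x in M. x \<in> A \<longrightarrow> f x = g x"
  shows "(LINT x:A|M. f x) = (LINT x:A|M. g x)"
  unfolding set_lebesgue_integral_def
  using assms by (intro integral_cong_AE) (auto simp: indicator_def)

lemma borel_measurable_indicator_mult_mult:
  fixes f g :: "'a \<Rightarrow> real"
  assumes "(\<lambda>x. indicator A x * f x) \<in> borel_measurable M" "(\<lambda>x. indicator A x * g x) \<in> borel_measurable M"
  shows "(\<lambda>x. indicator A x * (f x * g x)) \<in> borel_measurable M"
proof -
  have "(\<lambda>x. indicator A x * (f x * g x)) = (\<lambda>x. (indicator A x * f x) * (indicator A x * g x))"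
    by (auto simp: indicator_def)
  with assms show ?thesis by simp
qed

lemma set_integral_scaled_lincomb:
  fixes F :: "nat \<Rightarrow> 'a \<Rightarrow> real"
  assumes "\<And>l. l < N \<Longrightarrow> set_integrable M A (F l)"
  shows "(LINT x:A|M. a * (\<Sum>l<N. b l * F l x)) = a * (\<Sum>l<N. b l * (LINT x:A|M. F l x))"
proof -
  have "(LINT x:A|M. (\<Sum>l<N. b l * F l x)) = (\<Sum>l<N. LINT x:A|M. b l * F l x)"
    by (rule set_integral_sum) (use assms in auto)
  then show ?thesis by simp
qed

lemma abs_mult_le_sum_squares: "\<bar>a * b\<bar> \<le> a\<^sup>2 + (b\<^sup>2 :: real)"
proof -
  have "2 * \<bar>a\<bar> * \<bar>b\<bar> \<le> a\<^sup>2 + b\<^sup>2" using sum_squares_bound[of "\<bar>a\<bar>" "\<bar>b\<bar>"] by simp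
  then show ?thesis unfolding abs_mult using mult_nonneg_nonneg[OF abs_ge_zero abs_ge_zero, of a b] by linarith
qed

lemma sum_delta_mult: "(\<Sum>m<(n::nat). (if m = j then c else 0) * f m) = (if j < n then c * f j else (0::real))"
  by (induction n) (auto simp: less_Suc_eq)

definition bilin_form :: "nat \<Rightarrow> (nat \<Rightarrow> nat \<Rightarrow> real) \<Rightarrow> (nat \<Rightarrow> real) \<Rightarrow> (nat \<Rightarrow> real) \<Rightarrow> real" where
  "bilin_form n A x y = (\<Sum>i<n. \<Sum>j<n. x i * A i j * y j)"

text \<open>\<open>K\<^sub>Y = A \<otimes> K\<close> evaluated between two coefficient vectors of the form
  \<open>p \<otimes> u + q \<otimes> v\<close>, which is the shape of \<open>B\<close> tested with \<open>\<xi>\<^sub>j \<otimes> \<psi>\<^sub>l\<close>.\<close>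
lemma bilin_form_kron_expand:
  fixes A K :: "nat \<Rightarrow> nat \<Rightarrow> real" and p q p' q' u v u' v' :: "nat \<Rightarrow> real"
  shows "(\<Sum>j<m. \<Sum>l<n. (\<Sum>j'<m. \<Sum>l'<n. A j j' * K l l' * (p' j' * u' l' + q' j' * v' l')) * (p j * u l + q j * v l))
    = bilin_form m A p p' * bilin_form n K u u' + bilin_form m A q q' * bilin_form n K v v'
    + bilin_form m A p q' * bilin_form n K u v' + bilin_form m A q p' * bilin_form n K v u'"
proof -
  have product: "(\<Sum>j<m. \<Sum>j'<m. a j j') * (\<Sum>l<n. \<Sum>l'<n. b l l') =
      (\<Sum>j<m. \<Sum>l<n. \<Sum>j'<m. \<Sum>l'<n. a j j' * b l l')" for a b :: "nat \<Rightarrow> nat \<Rightarrow> real"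
    by (simp add: sum_product)
  show ?thesis
    unfolding bilin_form_def product
    by (simp only: sum_distrib_right sum.distrib[symmetric]) (intro sum.cong refl, simp add: algebra_simps)
qed

lemma bilin_form_eq_mmul:
  assumes "\<And>l. l < n \<Longrightarrow> X k l = u l" "\<And>l. l < n \<Longrightarrow> Y l k' = v l"
  shows "bilin_form n K u v = mmul n (mmul n X K) Y k k'"
proof -
  have "mmul n (mmul n X K) Y k k' = (\<Sum>l'<n. \<Sum>l<n. X k l * K l l' * Y l' k')"
    unfolding mmul_def by (simp add: sum_distrib_right)
  also have "\<dots> = bilin_form n K u v"
    unfolding bilin_form_def by (subst sum.swap) (simp add: assms)
  finally show ?thesis ..
qed

section \<open>The spatial basis\<close>

lemma abs_matrix_inner_le:
  fixes D :: "real^'d^'d"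
  assumes "\<And>i. \<bar>u $ i\<bar> \<le> C1" "\<And>i. \<bar>v $ i\<bar> \<le> C2"
  shows "\<bar>(D *v u) \<bullet> v\<bar> \<le> (\<Sum>i\<in>UNIV. \<Sum>j\<in>UNIV. \<bar>D $ i $ j\<bar>) * C1 * C2"
proof -
  have "\<bar>u $ j\<bar> * \<bar>v $ i\<bar> \<le> C1 * C2" for i j
    using assms by (meson abs_ge_zero mult_mono order.trans)
  then have "\<bar>D $ i $ j * u $ j * v $ i\<bar> \<le> \<bar>D $ i $ j\<bar> * C1 * C2" for i j
    by (metis abs_ge_zero abs_mult mult.assoc mult_left_mono)
  then have "\<bar>\<Sum>i\<in>UNIV. \<Sum>j\<in>UNIV. D $ i $ j * u $ j * v $ i\<bar> \<le> (\<Sum>i\<in>UNIV. \<Sum>j\<in>UNIV. \<bar>D $ i $ j\<bar> * C1 * C2)"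
    by (intro order.trans[OF sum_abs] sum_mono order.trans[OF sum_abs]) auto
  then show ?thesis
    by (simp add: inner_vec_def matrix_vector_mult_def sum_distrib_right)
qed

lemma grad_nth: "grad f x $ i = deriv (\<lambda>s. f (x + s *\<^sub>R axis i 1)) 0"
  unfolding grad_def by simp

text \<open>Continuous functions in \<open>W^{1,\<infinity>}(\<Omega>)\<close>, with the gradient taken pointwise almost
  everywhere.\<close>
locale W1inf_family =
  fixes \<Omega> :: "(real^'d) set" and N :: nat and \<psi> :: "nat \<Rightarrow> real^'d \<Rightarrow> real"
  assumes open_domain: "open \<Omega>" and bounded_domain: "bounded \<Omega>"
    and continuous: "\<And>l. l < N \<Longrightarrow> continuous_on \<Omega> (\<psi> l)"
    and bounded: "\<And>l. l < N \<Longrightarrow> \<exists>C. \<forall>x\<in>\<Omega>. \<bar>\<psi> l x\<bar> \<le> C"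
    and AE_has_grad: "AE x in lborel. x \<in> \<Omega> \<longrightarrow>
      (\<forall>l<N. \<forall>i. ((\<lambda>s. \<psi> l (x + s *\<^sub>R axis i 1)) has_real_derivative grad (\<psi> l) x $ i) (at 0))"
    and grad_bounded: "\<And>l. l < N \<Longrightarrow> \<exists>C. AE x in lborel. x \<in> \<Omega> \<longrightarrow> (\<forall>i. \<bar>grad (\<psi> l) x $ i\<bar> \<le> C)"
begin

lemma sets_borel_domain [measurable]: "\<Omega> \<in> sets borel"
  using open_domain by (rule borel_open)

lemma borel_measurable_grad:
  fixes \<eta> :: "real^'d \<Rightarrow> real"
  shows "continuous_on \<Omega> \<eta> \<Longrightarrow> (\<lambda>x. indicator \<Omega> x * grad \<eta> x $ i) \<in> borel_measurable borel"
  unfolding grad_nth by (rule borel_measurable_directional_deriv[OF open_domain])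

lemma borel_measurable_indicator_domain:
  fixes \<eta> :: "real^'d \<Rightarrow> real"
  shows "continuous_on \<Omega> \<eta> \<Longrightarrow> (\<lambda>x. indicator \<Omega> x * \<eta> x) \<in> borel_measurable borel"
  using borel_measurable_continuous_on_indicator[OF sets_borel_domain, of \<eta>] by simp

lemma borel_measurable_l2O_integrand:
  fixes \<eta> \<zeta> :: "real^'d \<Rightarrow> real"
  assumes "continuous_on \<Omega> \<eta>" "continuous_on \<Omega> \<zeta>"
  shows "(\<lambda>x. indicator \<Omega> x * (\<eta> x * \<zeta> x)) \<in> borel_measurable borel"
  using assms by (intro borel_measurable_indicator_mult_mult borel_measurable_indicator_domain)

lemma borel_measurable_aform_integrand:
  fixes \<eta> \<zeta> :: "real^'d \<Rightarrow> real"
  assumes "continuous_on \<Omega> \<eta>" "continuous_on \<Omega> \<zeta>"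
  shows "(\<lambda>x. indicator \<Omega> x * ((D *v grad \<eta> x) \<bullet> grad \<zeta> x + c * \<eta> x * \<zeta> x)) \<in> borel_measurable borel"
proof -
  have "indicator \<Omega> x * ((D *v grad \<eta> x) \<bullet> grad \<zeta> x + c * \<eta> x * \<zeta> x) =
     (\<Sum>i\<in>UNIV. \<Sum>j\<in>UNIV. D $ i $ j * (indicator \<Omega> x * grad \<eta> x $ j) * (indicator \<Omega> x * grad \<zeta> x $ i))
     + c * (indicator \<Omega> x * (\<eta> x * \<zeta> x))" for x
    by (cases "x \<in> \<Omega>") (simp_all add: inner_vec_def matrix_vector_mult_def sum_distrib_right)
  moreover note [measurable] = borel_measurable_grad[OF assms(1)] borel_measurable_grad[OF assms(2)]
    borel_measurable_l2O_integrand[OF assms]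
  ultimately show ?thesis by simp
qed

lemma set_integrable_l2O_integrand:
  assumes "k < N" "l < N"
  shows "set_integrable lborel \<Omega> (\<lambda>x. \<psi> k x * \<psi> l x)"
proof -
  obtain C1 C2 where "\<forall>x\<in>\<Omega>. \<bar>\<psi> k x\<bar> \<le> C1" "\<forall>x\<in>\<Omega>. \<bar>\<psi> l x\<bar> \<le> C2"
    using bounded assms by meson
  then have "AE x in lborel. x \<in> \<Omega> \<longrightarrow> \<bar>\<psi> k x * \<psi> l x\<bar> \<le> C1 * C2"
    by (intro AE_I2) (auto simp: abs_mult intro!: mult_mono)
  then show ?thesis
    using assms by (intro set_integrable_bounded sets_borel_domain bounded_domain
        borel_measurable_l2O_integrand continuous)
qed

lemma set_integrable_aform_integrand:
  assumes "k < N" "l < N"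
  shows "set_integrable lborel \<Omega> (\<lambda>x. (D *v grad (\<psi> k) x) \<bullet> grad (\<psi> l) x + c * \<psi> k x * \<psi> l x)"
proof -
  obtain C1 C2 where C: "\<forall>x\<in>\<Omega>. \<bar>\<psi> k x\<bar> \<le> C1" "\<forall>x\<in>\<Omega>. \<bar>\<psi> l x\<bar> \<le> C2"
    using bounded assms by meson
  obtain G1 G2 where "AE x in lborel. x \<in> \<Omega> \<longrightarrow> (\<forall>i. \<bar>grad (\<psi> k) x $ i\<bar> \<le> G1)"
    "AE x in lborel. x \<in> \<Omega> \<longrightarrow> (\<forall>i. \<bar>grad (\<psi> l) x $ i\<bar> \<le> G2)"
    using grad_bounded assms by meson
  then have "AE x in lborel. x \<in> \<Omega> \<longrightarrow> \<bar>(D *v grad (\<psi> k) x) \<bullet> grad (\<psi> l) x + c * \<psi> k x * \<psi> l x\<bar>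
      \<le> (\<Sum>i\<in>UNIV. \<Sum>j\<in>UNIV. \<bar>D $ i $ j\<bar>) * G1 * G2 + \<bar>c\<bar> * C1 * C2"
  proof eventually_elim
    case (elim x)
    show ?case
    proof
      assume "x \<in> \<Omega>"
      then have "\<bar>(D *v grad (\<psi> k) x) \<bullet> grad (\<psi> l) x\<bar> \<le> (\<Sum>i\<in>UNIV. \<Sum>j\<in>UNIV. \<bar>D $ i $ j\<bar>) * G1 * G2"
        and "\<bar>c * \<psi> k x * \<psi> l x\<bar> \<le> \<bar>c\<bar> * C1 * C2"
        using elim C unfolding abs_mult by (auto intro!: abs_matrix_inner_le mult_mono)
      then show "\<bar>(D *v grad (\<psi> k) x) \<bullet> grad (\<psi> l) x + c * \<psi> k x * \<psi> l x\<bar>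
          \<le> (\<Sum>i\<in>UNIV. \<Sum>j\<in>UNIV. \<bar>D $ i $ j\<bar>) * G1 * G2 + \<bar>c\<bar> * C1 * C2"
        by linarith
    qed
  qed
  then show ?thesis
    using assms by (intro set_integrable_bounded sets_borel_domain bounded_domain
        borel_measurable_aform_integrand continuous)
qed

lemma l2O_scaled_lincomb:
  assumes "k < N"
  shows "l2O \<Omega> (\<lambda>x. a * \<psi> k x) (\<lambda>x. \<Sum>l<N. b l * \<psi> l x) = a * (\<Sum>l<N. b l * l2O \<Omega> (\<psi> k) (\<psi> l))"
proof -
  have "l2O \<Omega> (\<lambda>x. a * \<psi> k x) (\<lambda>x. \<Sum>l<N. b l * \<psi> l x) = (LINT x:\<Omega>|lborel. a * (\<Sum>l<N. b l * (\<psi> k x * \<psi> l x)))"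
    unfolding l2O_def by (simp add: sum_distrib_left mult_ac)
  also have "\<dots> = a * (\<Sum>l<N. b l * l2O \<Omega> (\<psi> k) (\<psi> l))"
    unfolding l2O_def using assms set_integrable_l2O_integrand by (intro set_integral_scaled_lincomb) auto
  finally show ?thesis .
qed

lemma AE_grad_scaled:
  assumes "k < N"
  shows "AE x in lborel. x \<in> \<Omega> \<longrightarrow> grad (\<lambda>x. a * \<psi> k x) x = a *\<^sub>R grad (\<psi> k) x"
  using AE_has_grad
proof eventually_elim
  case (elim x)
  then show ?case
    using assms by (auto simp: vec_eq_iff grad_nth[of "\<lambda>x. a * \<psi> k x"] intro!: DERIV_imp_deriv DERIV_cmult)
qed

lemma AE_grad_lincomb:
  "AE x in lborel. x \<in> \<Omega> \<longrightarrow> grad (\<lambda>x. \<Sum>l<N. b l * \<psi> l x) x = (\<Sum>l<N. b l *\<^sub>R grad (\<psi> l) x)"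
  using AE_has_grad
proof eventually_elim
  case (elim x)
  then show ?case
    by (auto simp: vec_eq_iff grad_nth[of "\<lambda>x. \<Sum>l<N. b l * \<psi> l x"] sum_component
        intro!: DERIV_imp_deriv DERIV_sum DERIV_cmult)
qed

lemma aform_scaled_lincomb:
  assumes k: "k < N"
  shows "aform \<Omega> D c (\<lambda>x. a * \<psi> k x) (\<lambda>x. \<Sum>l<N. b l * \<psi> l x) = a * (\<Sum>l<N. b l * aform \<Omega> D c (\<psi> k) (\<psi> l))"
proof -
  let ?F = "\<lambda>l x. (D *v grad (\<psi> k) x) \<bullet> grad (\<psi> l) x + c * \<psi> k x * \<psi> l x"
  define G where "G l x = indicator \<Omega> x * ?F l x" for l x
  have "G l \<in> borel_measurable borel" if "l < N" for l
    unfolding G_def using k that by (intro borel_measurable_aform_integrand continuous)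
  moreover have "(\<lambda>x. indicator \<Omega> x * (a * (\<Sum>l<N. b l * ?F l x))) = (\<lambda>x. a * (\<Sum>l<N. b l * G l x))"
    by (simp add: fun_eq_iff G_def sum_distrib_left mult_ac)
  ultimately have "(\<lambda>x. indicator \<Omega> x * (a * (\<Sum>l<N. b l * ?F l x))) \<in> borel_measurable borel"
    by (auto intro!: borel_measurable_times borel_measurable_sum)
  moreover have "(\<lambda>x. indicator \<Omega> x * ((D *v grad (\<lambda>x. a * \<psi> k x) x) \<bullet> grad (\<lambda>x. \<Sum>l<N. b l * \<psi> l x) x
      + c * (a * \<psi> k x) * (\<Sum>l<N. b l * \<psi> l x))) \<in> borel_measurable borel"
    using k by (intro borel_measurable_aform_integrand continuous_intros continuous) auto
  moreover have "AE x in lborel. x \<in> \<Omega> \<longrightarrow>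
      (D *v grad (\<lambda>x. a * \<psi> k x) x) \<bullet> grad (\<lambda>x. \<Sum>l<N. b l * \<psi> l x) x + c * (a * \<psi> k x) * (\<Sum>l<N. b l * \<psi> l x)
      = a * (\<Sum>l<N. b l * ?F l x)"
    using AE_grad_scaled[OF k, of a] AE_grad_lincomb[of b]
    by eventually_elim
      (simp add: inner_sum_right matrix_vector_mult_scaleR sum_distrib_left sum.distrib algebra_simps)
  ultimately have "aform \<Omega> D c (\<lambda>x. a * \<psi> k x) (\<lambda>x. \<Sum>l<N. b l * \<psi> l x) = (LINT x:\<Omega>|lborel. a * (\<Sum>l<N. b l * ?F l x))"
    unfolding aform_def by (intro set_integral_cong_AE) auto
  also have "\<dots> = a * (\<Sum>l<N. b l * aform \<Omega> D c (\<psi> k) (\<psi> l))"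
    unfolding aform_def using k set_integrable_aform_integrand by (intro set_integral_scaled_lincomb) auto
  finally show ?thesis .
qed

end

section \<open>The temporal test basis\<close>

text \<open>Measurability is part of the notion because \<open>lborel\<close> is not complete.\<close>
definition ae_expansion :: "nat \<Rightarrow> (nat \<Rightarrow> real \<Rightarrow> real) \<Rightarrow> (real \<Rightarrow> real) \<Rightarrow> (nat \<Rightarrow> real) \<Rightarrow> bool" where
  "ae_expansion M \<xi> f a \<longleftrightarrow> (\<lambda>t. indicator {0<..<1::real} t * f t) \<in> borel_measurable borel \<and>
     (AE t in lborel. t \<in> {0<..<1} \<longrightarrow> f t = (\<Sum>j<M. a j * \<xi> j t))"

locale L2I_orthogonal_family =
  fixes M :: nat and \<xi> :: "nat \<Rightarrow> real \<Rightarrow> real" and Oinv :: "nat \<Rightarrow> nat \<Rightarrow> real"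
  assumes measurable_basis: "\<And>j. j < M \<Longrightarrow> set_borel_measurable lborel {0<..<1} (\<xi> j)"
    and square_integrable: "\<And>j. j < M \<Longrightarrow> set_integrable lborel {0<..<1} (\<lambda>t. (\<xi> j t)\<^sup>2)"
    and orthogonal: "\<And>j j'. j < M \<Longrightarrow> j' < M \<Longrightarrow> j \<noteq> j' \<Longrightarrow> l2I (\<xi> j) (\<xi> j') = 0"
    and Gram_left_inverse: "\<And>j j'. j < M \<Longrightarrow> j' < M \<Longrightarrow>
      mmul M Oinv (\<lambda>i j. l2I (\<xi> j) (\<xi> i)) j j' = (if j = j' then 1 else 0)"
begin

lemma borel_measurable_indicator_basis: "j < M \<Longrightarrow> (\<lambda>t. indicator {0<..<1::real} t * \<xi> j t) \<in> borel_measurable borel"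
  using measurable_basis unfolding set_borel_measurable_def by simp

lemma set_integrable_mult:
  assumes "j < M" "j' < M"
  shows "set_integrable lborel {0<..<1} (\<lambda>t. \<xi> j t * \<xi> j' t)"
proof (rule set_integrable_bound[where f="\<lambda>t. (\<xi> j t)\<^sup>2 + (\<xi> j' t)\<^sup>2"])
  show "set_integrable lborel {0<..<1} (\<lambda>t. (\<xi> j t)\<^sup>2 + (\<xi> j' t)\<^sup>2)"
    using assms by (intro set_integral_add square_integrable)
  show "set_borel_measurable lborel {0<..<1} (\<lambda>t. \<xi> j t * \<xi> j' t)"
    using borel_measurable_indicator_mult_mult[OF borel_measurable_indicator_basis[OF assms(1)]
        borel_measurable_indicator_basis[OF assms(2)]]
    unfolding set_borel_measurable_def by simp
  show "AE t in lborel. t \<in> {0<..<1} \<longrightarrow> norm (\<xi> j t * \<xi> j' t) \<le> norm ((\<xi> j t)\<^sup>2 + (\<xi> j' t)\<^sup>2)"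
    using abs_mult_le_sum_squares by auto
qed

lemma l2I_expansion:
  assumes f: "ae_expansion M \<xi> f a" and g: "ae_expansion M \<xi> g b"
  shows "set_integrable lborel {0<..<1} (\<lambda>t. f t * g t)"
    and "l2I f g = (\<Sum>j<M. a j * b j * l2I (\<xi> j) (\<xi> j))"
proof -
  let ?I = "{0<..<1::real}"
  define h where "h t = (\<Sum>j<M. \<Sum>j'<M. a j * b j' * (\<xi> j t * \<xi> j' t))" for t
  have h_integrable: "set_integrable lborel ?I h"
    unfolding h_def by (intro set_integrable_sum set_integrable_mult_right set_integrable_mult) auto
  have fg_measurable: "(\<lambda>t. indicator ?I t * (f t * g t)) \<in> borel_measurable lborel"
    using f g unfolding ae_expansion_def by (simp add: borel_measurable_indicator_mult_mult)
  from f g have "AE t in lborel. t \<in> ?I \<longrightarrow> f t = (\<Sum>j<M. a j * \<xi> j t)"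
    and "AE t in lborel. t \<in> ?I \<longrightarrow> g t = (\<Sum>j<M. b j * \<xi> j t)"
    unfolding ae_expansion_def by auto
  then have "AE t in lborel. t \<in> ?I \<longrightarrow> f t * g t = h t"
    unfolding h_def by eventually_elim (simp add: sum_product mult_ac)
  then have AE_eq: "AE t in lborel. indicator ?I t * h t = indicator ?I t * (f t * g t)"
    by eventually_elim (simp add: indicator_def)
  show "set_integrable lborel ?I (\<lambda>t. f t * g t)"
    unfolding set_integrable_def
  proof (rule integrable_cong_AE_imp)
    show "integrable lborel (\<lambda>t. indicator ?I t *\<^sub>R h t)"
      using h_integrable unfolding set_integrable_def .
  qed (use fg_measurable AE_eq in simp_all)
  have "l2I f g = (LINT t:?I|lborel. h t)"
    unfolding l2I_def
  proof (rule set_integral_cong_AE[OF fg_measurable])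
    show "(\<lambda>t. indicator ?I t * h t) \<in> borel_measurable lborel"
      using borel_measurable_integrable[OF h_integrable[unfolded set_integrable_def]] by simp
    show "AE t in lborel. t \<in> ?I \<longrightarrow> f t * g t = h t" by fact
  qed
  also have "\<dots> = (\<Sum>j<M. LINT t:?I|lborel. (\<Sum>j'<M. a j * b j' * (\<xi> j t * \<xi> j' t)))"
    unfolding h_def
    by (rule set_integral_sum) (auto intro!: set_integrable_sum set_integrable_mult)
  also have "\<dots> = (\<Sum>j<M. \<Sum>j'<M. a j * b j' * l2I (\<xi> j) (\<xi> j'))"
    unfolding l2I_def by (intro sum.cong refl) (subst set_integral_sum, auto intro: set_integrable_mult)
  also have "\<dots> = (\<Sum>j<M. a j * b j * l2I (\<xi> j) (\<xi> j))"
  proof (rule sum.cong[OF refl])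
    fix j assume "j \<in> {..<M}"
    then show "(\<Sum>j'<M. a j * b j' * l2I (\<xi> j) (\<xi> j')) = a j * b j * l2I (\<xi> j) (\<xi> j)"
      using orthogonal by (subst sum.remove[of _ j]) (auto intro!: sum.neutral)
  qed
  finally show "l2I f g = (\<Sum>j<M. a j * b j * l2I (\<xi> j) (\<xi> j))" .
qed

lemma ae_expansion_basis: "j < M \<Longrightarrow> ae_expansion M \<xi> (\<xi> j) (\<lambda>m. if m = j then 1 else 0)"
  unfolding ae_expansion_def using borel_measurable_indicator_basis by (simp add: sum_delta_mult)

lemma l2I_expansion_basis:
  assumes "ae_expansion M \<xi> f a" "j < M"
  shows "l2I f (\<xi> j) = a j * l2I (\<xi> j) (\<xi> j)"
proof -
  have "(\<Sum>m<M. a m * (if m = j then 1 else 0) * l2I (\<xi> m) (\<xi> m)) =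
      (\<Sum>m<M. (if m = j then 1 else 0) * (a m * l2I (\<xi> m) (\<xi> m)))"
    by (intro sum.cong) auto
  then show ?thesis
    using l2I_expansion(2)[OF assms(1) ae_expansion_basis[OF assms(2)]] assms(2)
    by (simp add: sum_delta_mult)
qed

lemma Oinv_mult_norm:
  assumes "j < M" "j' < M"
  shows "Oinv j j' * l2I (\<xi> j') (\<xi> j') = (if j = j' then 1 else 0)"
proof -
  have "mmul M Oinv (\<lambda>i j. l2I (\<xi> j) (\<xi> i)) j j' = Oinv j j' * l2I (\<xi> j') (\<xi> j')"
    unfolding mmul_def using assms orthogonal
    by (subst sum.remove[of _ j']) (auto intro!: sum.neutral)
  then show ?thesis using Gram_left_inverse[OF assms] by simp
qed

text \<open>Parseval's identity on \<open>span \<Xi>\<close>: the inverse Gram matrix turns the coefficients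
  \<open>l2I _ (\<xi> j)\<close> back into the inner product.\<close>
lemma parseval:
  assumes f: "ae_expansion M \<xi> f a" and g: "ae_expansion M \<xi> g b"
  shows "bilin_form M Oinv (\<lambda>j. l2I f (\<xi> j)) (\<lambda>j. l2I g (\<xi> j)) = l2I f g"
proof -
  have "bilin_form M Oinv (\<lambda>j. l2I f (\<xi> j)) (\<lambda>j. l2I g (\<xi> j)) =
      (\<Sum>j<M. \<Sum>j'<M. a j * l2I (\<xi> j) (\<xi> j) * b j' * (Oinv j j' * l2I (\<xi> j') (\<xi> j')))"
    unfolding bilin_form_def
    by (intro sum.cong refl) (simp add: l2I_expansion_basis[OF f] l2I_expansion_basis[OF g] mult_ac)
  also have "\<dots> = (\<Sum>j<M. a j * b j * l2I (\<xi> j) (\<xi> j))"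
    by (intro sum.cong refl) (simp add: Oinv_mult_norm if_distrib mult_ac cong: if_cong)
  also have "\<dots> = l2I f g" using l2I_expansion(2)[OF f g] by simp
  finally show ?thesis .
qed

end

lemma deriv_shift0: "deriv (\<lambda>s. f (t + s)) 0 = deriv f (t::real)"
proof -
  have "((\<lambda>s. f (t + s)) has_real_derivative D) (at 0) \<longleftrightarrow> (f has_real_derivative D) (at t)" for D
    using DERIV_shift[of f D 0 t] by (simp add: add.commute)
  then show ?thesis unfolding deriv_def by simp
qed

locale time_discretization = L2I_orthogonal_family Mt \<xi> Oinv
  for Mt \<xi> Oinv +
  fixes Nt :: nat and \<phi> :: "nat \<Rightarrow> real \<Rightarrow> real" and B :: "real set"
  assumes finite_breaks: "finite B"
    and continuous_basis: "\<And>i. i < Nt \<Longrightarrow> continuous_on {0<..<1} (\<phi> i)"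
    and differentiable_basis: "\<And>i t. i < Nt \<Longrightarrow> t \<in> {0<..<1} \<Longrightarrow> t \<notin> B \<Longrightarrow> \<phi> i differentiable (at t)"
    and basis_in_span: "\<And>i. i < Nt \<Longrightarrow> \<exists>a. AE t in lborel. t \<in> {0<..<1} \<longrightarrow> \<phi> i t = (\<Sum>j<Mt. a j * \<xi> j t)"
    and deriv_in_span: "\<And>i. i < Nt \<Longrightarrow>
      \<exists>a. AE t in lborel. t \<in> {0<..<1} \<longrightarrow> deriv (\<phi> i) t = (\<Sum>j<Mt. a j * \<xi> j t)"
begin

lemma ae_expansion_time_basis:
  assumes "i < Nt"
  shows "\<exists>a. ae_expansion Mt \<xi> (\<phi> i) a"
proof -
  have "(\<lambda>t. indicator {0<..<1::real} t * \<phi> i t) \<in> borel_measurable borel"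
    using borel_measurable_continuous_on_indicator[OF _ continuous_basis[OF assms]] by simp
  then show ?thesis using basis_in_span[OF assms] unfolding ae_expansion_def by blast
qed

lemma ae_expansion_time_deriv:
  assumes "i < Nt"
  shows "\<exists>a. ae_expansion Mt \<xi> (deriv (\<phi> i)) a"
proof -
  have "(\<lambda>t. indicator {0<..<1::real} t * deriv (\<phi> i) t) \<in> borel_measurable borel"
    using borel_measurable_directional_deriv[OF _ continuous_basis[OF assms], of 1] by (simp add: deriv_shift0)
  then show ?thesis using deriv_in_span[OF assms] unfolding ae_expansion_def by blast
qed

end

section \<open>Tensor-product test functions\<close>

lemma tens_apply: "tens f g t x = f t * g x"
  unfolding tens_def ..

lemma l2I_commute: "l2I f g = l2I g f"
  unfolding l2I_def by (simp add: mult.commute)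

lemma l2O_commute: "l2O \<Omega> f g = l2O \<Omega> g f"
  unfolding l2O_def by (simp add: mult.commute)

lemma aform_commute:
  fixes D :: "real^'d^'d"
  assumes "transpose D = D"
  shows "aform \<Omega> D c f g = aform \<Omega> D c g f"
proof -
  have "(D *v u) \<bullet> v = (D *v v) \<bullet> u" for u v :: "real^'d"
    by (metis assms dot_lmul_matrix inner_commute vector_transpose_matrix)
  then show ?thesis unfolding aform_def by (simp add: mult_ac)
qed

locale space_time_discretization =
  W1inf_family \<Omega> Nx \<psi> + time_discretization Mt \<xi> Oinv Nt \<phi> B
  for \<Omega> :: "(real^'d) set" and Nx \<psi> Mt \<xi> Oinv Nt \<phi> B
begin

lemma Bform_integrand_tensor:
  assumes i: "i < Nt" and k: "k < Nx" and t: "t \<in> {0<..<1}" "t \<notin> B"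
  shows "l2O \<Omega> (\<lambda>x. deriv (\<lambda>s. tens (\<phi> i) (\<psi> k) s x) t) (\<lambda>x. \<Sum>j<Mt. \<Sum>l<Nx. \<gamma> j l * (\<xi> j t * \<psi> l x))
      + aform \<Omega> D c (tens (\<phi> i) (\<psi> k) t) (\<lambda>x. \<Sum>j<Mt. \<Sum>l<Nx. \<gamma> j l * (\<xi> j t * \<psi> l x))
    = (\<Sum>j<Mt. \<Sum>l<Nx. \<gamma> j l * (l2O \<Omega> (\<psi> k) (\<psi> l) * (deriv (\<phi> i) t * \<xi> j t)
        + aform \<Omega> D c (\<psi> k) (\<psi> l) * (\<phi> i t * \<xi> j t)))"
proof -
  define \<beta> where "\<beta> l = (\<Sum>j<Mt. \<gamma> j l * \<xi> j t)" for l
  obtain d where "(\<phi> i has_real_derivative d) (at t)"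
    using differentiable_basis[OF i t] by (auto simp: real_differentiable_def)
  then have deriv_eq: "(\<lambda>x. deriv (\<lambda>s. tens (\<phi> i) (\<psi> k) s x) t) = (\<lambda>x. deriv (\<phi> i) t * \<psi> k x)"
    unfolding tens_apply by (simp add: fun_eq_iff DERIV_imp_deriv DERIV_cmult_right)
  have v_eq: "(\<lambda>x. \<Sum>j<Mt. \<Sum>l<Nx. \<gamma> j l * (\<xi> j t * \<psi> l x)) = (\<lambda>x. \<Sum>l<Nx. \<beta> l * \<psi> l x)"
    unfolding \<beta>_def by (subst sum.swap) (simp add: sum_distrib_left sum_distrib_right mult_ac)
  have w_eq: "tens (\<phi> i) (\<psi> k) t = (\<lambda>x. \<phi> i t * \<psi> k x)"
    unfolding tens_def ..
  have sum_eq: "deriv (\<phi> i) t * (\<Sum>l<Nx. \<beta> l * l2O \<Omega> (\<psi> k) (\<psi> l))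
      + \<phi> i t * (\<Sum>l<Nx. \<beta> l * aform \<Omega> D c (\<psi> k) (\<psi> l))
    = (\<Sum>l<Nx. \<Sum>j<Mt. \<gamma> j l * (l2O \<Omega> (\<psi> k) (\<psi> l) * (deriv (\<phi> i) t * \<xi> j t)
        + aform \<Omega> D c (\<psi> k) (\<psi> l) * (\<phi> i t * \<xi> j t)))"
    unfolding \<beta>_def
    by (simp add: sum_distrib_left sum_distrib_right sum.distrib[symmetric] algebra_simps)
  show ?thesis
    unfolding deriv_eq v_eq w_eq l2O_scaled_lincomb[OF k] aform_scaled_lincomb[OF k] sum_eq
    by (rule sum.swap)
qed

lemma Bform_tensor_lincomb:
  assumes i: "i < Nt" and k: "k < Nx"
  shows "Bform \<Omega> D c (tens (\<phi> i) (\<psi> k)) (\<lambda>t x. \<Sum>j<Mt. \<Sum>l<Nx. \<gamma> j l * (\<xi> j t * \<psi> l x)) =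
    (\<Sum>j<Mt. \<Sum>l<Nx. \<gamma> j l * (l2I (deriv (\<phi> i)) (\<xi> j) * l2O \<Omega> (\<psi> k) (\<psi> l)
      + l2I (\<phi> i) (\<xi> j) * aform \<Omega> D c (\<psi> k) (\<psi> l)))"
proof -
  let ?I = "{0<..<1::real}"
  let ?v = "\<lambda>t x. \<Sum>j<Mt. \<Sum>l<Nx. \<gamma> j l * (\<xi> j t * \<psi> l x)"
  let ?w = "tens (\<phi> i) (\<psi> k)"
  define F where "F t = l2O \<Omega> (\<lambda>x. deriv (\<lambda>s. ?w s x) t) (?v t) + aform \<Omega> D c (?w t) (?v t)" for t
  define G where "G t = (\<Sum>j<Mt. \<Sum>l<Nx. \<gamma> j l * (l2O \<Omega> (\<psi> k) (\<psi> l) * (deriv (\<phi> i) t * \<xi> j t)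
      + aform \<Omega> D c (\<psi> k) (\<psi> l) * (\<phi> i t * \<xi> j t)))" for t
  obtain a a' where a: "ae_expansion Mt \<xi> (\<phi> i) a" and a': "ae_expansion Mt \<xi> (deriv (\<phi> i)) a'"
    using ae_expansion_time_basis[OF i] ae_expansion_time_deriv[OF i] by blast
  have integrable: "set_integrable lborel ?I (\<lambda>t. \<gamma> j l * (l2O \<Omega> (\<psi> k) (\<psi> l) * (deriv (\<phi> i) t * \<xi> j t)
      + aform \<Omega> D c (\<psi> k) (\<psi> l) * (\<phi> i t * \<xi> j t)))" if "j < Mt" for j l
    using l2I_expansion(1)[OF a ae_expansion_basis[OF that]] l2I_expansion(1)[OF a' ae_expansion_basis[OF that]]
    by (intro set_integrable_mult_right set_integral_add(1))
  then have "set_integrable lborel ?I G"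
    unfolding G_def by (intro set_integrable_sum) auto
  then have G_measurable: "(\<lambda>t. indicator ?I t * G t) \<in> borel_measurable borel"
    using borel_measurable_integrable unfolding set_integrable_def by fastforce
  have F_measurable: "(\<lambda>t. indicator ?I t * F t) \<in> borel_measurable borel"
    using G_measurable
  proof (rule measurable_discrete_difference[where X=B])
    show "countable B" using finite_breaks by (rule countable_finite)
  qed (auto simp: F_def G_def Bform_integrand_tensor[OF i k] indicator_def)
  have "Bform \<Omega> D c ?w ?v = (LINT t:?I|lborel. G t)"
    unfolding Bform_def F_def[symmetric]
  proof (rule set_integral_cong_AE)
    show "AE t in lborel. t \<in> ?I \<longrightarrow> F t = G t"
      using AE_not_in[OF finite_imp_null_set_lborel[OF finite_breaks]]
      by eventually_elim (simp add: F_def G_def Bform_integrand_tensor[OF i k])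
  qed (use F_measurable G_measurable in simp_all)
  also have "\<dots> = (\<Sum>j<Mt. \<Sum>l<Nx. \<gamma> j l * (l2I (deriv (\<phi> i)) (\<xi> j) * l2O \<Omega> (\<psi> k) (\<psi> l)
      + l2I (\<phi> i) (\<xi> j) * aform \<Omega> D c (\<psi> k) (\<psi> l)))"
    unfolding G_def l2I_def
    using integrable l2I_expansion(1)[OF a ae_expansion_basis] l2I_expansion(1)[OF a' ae_expansion_basis]
    by (subst set_integral_sum, auto intro!: set_integrable_sum sum.cong set_integral_sum[THEN trans])
  finally show ?thesis .
qed

lemma Bform_tensor:
  assumes "i < Nt" "k < Nx" "j < Mt" "l < Nx"
  shows "Bform \<Omega> D c (tens (\<phi> i) (\<psi> k)) (tens (\<xi> j) (\<psi> l)) =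
    l2I (deriv (\<phi> i)) (\<xi> j) * l2O \<Omega> (\<psi> k) (\<psi> l) + l2I (\<phi> i) (\<xi> j) * aform \<Omega> D c (\<psi> k) (\<psi> l)"
proof -
  have tens_eq: "tens (\<xi> j) (\<psi> l) =
      (\<lambda>t x. \<Sum>j'<Mt. \<Sum>l'<Nx. (if l' = l then if j' = j then 1 else 0 else 0) * (\<xi> j' t * \<psi> l' x))"
    using assms by (simp add: fun_eq_iff tens_apply sum_delta_mult)
  show ?thesis
    unfolding tens_eq Bform_tensor_lincomb[OF assms(1,2)] using assms by (simp add: sum_delta_mult)
qed

lemma KYdelta_Bform_tensor:
  assumes "i < Nt" "k < Nx"
  shows "KYdelta Mt Nx Oinv Kx \<xi> \<psi> (Bform \<Omega> D c (tens (\<phi> i) (\<psi> k))) =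
    (\<lambda>t x. \<Sum>j<Mt. \<Sum>l<Nx. (\<Sum>j'<Mt. \<Sum>l'<Nx. Oinv j j' * Kx l l' *
       (l2I (deriv (\<phi> i)) (\<xi> j') * l2O \<Omega> (\<psi> k) (\<psi> l') + l2I (\<phi> i) (\<xi> j') * aform \<Omega> D c (\<psi> k) (\<psi> l')))
      * (\<xi> j t * \<psi> l x))"
  unfolding KYdelta_def using assms
  by (intro ext sum.cong refl) (simp add: kron_def Bform_tensor tens_apply sum_distrib_right)

lemma Sdelta_tensor:
  fixes D :: "real^'d^'d" and c :: real
  assumes i: "i < Nt" and k: "k < Nx" and i': "i' < Nt" and k': "k' < Nx" and D: "transpose D = D"
  defines "Mx \<equiv> \<lambda>k l. l2O \<Omega> (\<psi> l) (\<psi> k)" and "Ax \<equiv> \<lambda>k l. aform \<Omega> D c (\<psi> l) (\<psi> k)"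
  shows "Sdelta \<Omega> D c Mt Nx Oinv Kx \<xi> \<psi> (tens (\<phi> i') (\<psi> k')) (tens (\<phi> i) (\<psi> k)) =
      l2I (deriv (\<phi> i')) (deriv (\<phi> i)) * mmul Nx (mmul Nx Mx Kx) Mx k k'
    + l2I (\<phi> i') (\<phi> i) * mmul Nx (mmul Nx Ax Kx) Ax k k'
    + l2I (deriv (\<phi> i)) (\<phi> i') * mmul Nx (mmul Nx Mx Kx) Ax k k'
    + l2I (deriv (\<phi> i')) (\<phi> i) * mmul Nx (mmul Nx Ax Kx) Mx k k'
    + \<phi> i 0 * \<phi> i' 0 * Mx k k'"
proof -
  let ?P = "\<lambda>i j. l2I (deriv (\<phi> i)) (\<xi> j)" and ?Q = "\<lambda>i j. l2I (\<phi> i) (\<xi> j)"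
  let ?M = "\<lambda>k l. l2O \<Omega> (\<psi> k) (\<psi> l)" and ?A = "\<lambda>k l. aform \<Omega> D c (\<psi> k) (\<psi> l)"
  obtain p p' q q' where p: "ae_expansion Mt \<xi> (deriv (\<phi> i)) p" and p': "ae_expansion Mt \<xi> (deriv (\<phi> i')) p'"
    and q: "ae_expansion Mt \<xi> (\<phi> i) q" and q': "ae_expansion Mt \<xi> (\<phi> i') q'"
    using ae_expansion_time_basis ae_expansion_time_deriv i i' by meson
  have "l2O \<Omega> (tens (\<phi> i') (\<psi> k') 0) (tens (\<phi> i) (\<psi> k) 0) = \<phi> i 0 * \<phi> i' 0 * Mx k k'"
    unfolding l2O_def Mx_def by (simp add: tens_apply mult_ac)
  then have "Sdelta \<Omega> D c Mt Nx Oinv Kx \<xi> \<psi> (tens (\<phi> i') (\<psi> k')) (tens (\<phi> i) (\<psi> k)) =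
      bilin_form Mt Oinv (?P i) (?P i') * bilin_form Nx Kx (?M k) (?M k')
    + bilin_form Mt Oinv (?Q i) (?Q i') * bilin_form Nx Kx (?A k) (?A k')
    + bilin_form Mt Oinv (?P i) (?Q i') * bilin_form Nx Kx (?M k) (?A k')
    + bilin_form Mt Oinv (?Q i) (?P i') * bilin_form Nx Kx (?A k) (?M k')
    + \<phi> i 0 * \<phi> i' 0 * Mx k k'"
    unfolding Sdelta_def KYdelta_Bform_tensor[OF i' k'] Bform_tensor_lincomb[OF i k]
    by (simp only: bilin_form_kron_expand)
  also have "bilin_form Mt Oinv (?P i) (?P i') = l2I (deriv (\<phi> i')) (deriv (\<phi> i))"
    using parseval[OF p p'] l2I_commute by metis
  also have "bilin_form Mt Oinv (?Q i) (?Q i') = l2I (\<phi> i') (\<phi> i)"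
    using parseval[OF q q'] l2I_commute by metis
  also have "bilin_form Mt Oinv (?P i) (?Q i') = l2I (deriv (\<phi> i)) (\<phi> i')"
    using parseval[OF p q'] .
  also have "bilin_form Mt Oinv (?Q i) (?P i') = l2I (deriv (\<phi> i')) (\<phi> i)"
    using parseval[OF q p'] l2I_commute by metis
  also have "bilin_form Nx Kx (?M k) (?M k') = mmul Nx (mmul Nx Mx Kx) Mx k k'"
    unfolding Mx_def by (rule bilin_form_eq_mmul) (simp_all add: l2O_commute)
  also have "bilin_form Nx Kx (?A k) (?A k') = mmul Nx (mmul Nx Ax Kx) Ax k k'"
    unfolding Ax_def by (rule bilin_form_eq_mmul) (simp_all add: aform_commute[OF D])
  also have "bilin_form Nx Kx (?M k) (?A k') = mmul Nx (mmul Nx Mx Kx) Ax k k'"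
    unfolding Mx_def Ax_def by (rule bilin_form_eq_mmul) (simp_all add: l2O_commute)
  also have "bilin_form Nx Kx (?A k) (?M k') = mmul Nx (mmul Nx Ax Kx) Mx k k'"
    unfolding Mx_def Ax_def by (rule bilin_form_eq_mmul) (simp_all add: aform_commute[OF D])
  finally show ?thesis .
qed

end

section \<open>The discrete spaces of the theorem\<close>

lemma interval_partition_locate:
  assumes "interval_partition ts" "t \<in> {0<..<1}" "t \<notin> set ts"
  shows "\<exists>m. Suc m < length ts \<and> t \<in> {ts ! m <..< ts ! Suc m}"
proof -
  have ts: "ts \<noteq> []" "hd ts = 0" "last ts = 1"
    using assms(1) unfolding interval_partition_def by auto
  let ?A = "{m. m < length ts \<and> ts ! m < t}"
  define m where "m = Max ?A"
  have "finite ?A" by simp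
  moreover have "0 \<in> ?A"
    using ts assms(2) hd_conv_nth[OF ts(1)] by auto
  ultimately have m: "m < length ts" "ts ! m < t" and maximal: "\<And>j. j \<in> ?A \<Longrightarrow> j \<le> m"
    unfolding m_def using Max_in[of ?A] Max_ge[of ?A] by blast+
  have "ts ! (length ts - 1) = 1" using ts last_conv_nth[OF ts(1)] by simp
  with m assms(2) have "m \<noteq> length ts - 1" by auto
  with m(1) have "Suc m < length ts" by linarith
  moreover have "ts ! Suc m \<noteq> t" using assms(3) \<open>Suc m < length ts\<close> nth_mem by metis
  ultimately show ?thesis using m maximal[of "Suc m"] by (intro exI[of _ m]) force
qed

lemma Xt_space_differentiable:
  assumes "interval_partition ts" "f \<in> Xt_space p ts" "t \<in> {0<..<1}" "t \<notin> set ts"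
  shows "f differentiable (at t)"
proof -
  obtain m where m: "Suc m < length ts" "t \<in> {ts ! m <..< ts ! Suc m}"
    using interval_partition_locate[OF assms(1,3,4)] by blast
  moreover have "m < length ts - 1" using m(1) by simp
  ultimately obtain q :: "real poly" where q: "\<forall>s \<in> {ts ! m <..< ts ! Suc m}. f s = poly q s"
    using assms(2) unfolding Xt_space_def pw_poly_1d_def by blast
  have "(f has_real_derivative poly (pderiv q) t) (at t)"
    by (rule has_field_derivative_transform_within_open[OF poly_DERIV _ m(2)]) (use q in auto)
  then show ?thesis by (auto simp: real_differentiable_def)
qed

lemma AE_in_span_trans:
  assumes "AE t in lborel. t \<in> {0<..<1} \<longrightarrow> f t = g t"
    and "AE t in lborel. t \<in> {0<..<1} \<longrightarrow> g t = (\<Sum>j<M. a j * \<xi> j t)"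
  shows "\<exists>a. AE t in lborel. t \<in> {0<..<1} \<longrightarrow> f t = (\<Sum>j<M. a j * \<xi> j t)"
  using assms by (intro exI[of _ a]) (auto elim: AE_mp)

lemma time_discretization_Xt_space:
  assumes part: "interval_partition ts" and basis: "lagrange_basis {0..1} (Xt_space p ts) Nt \<phi>"
    and "Yt \<subseteq> L2I"
    and values_in_Yt: "\<forall>f \<in> Xt_space p ts. \<exists>g\<in>Yt. AE t in lborel. t \<in> {0<..<1} \<longrightarrow> f t = g t"
    and derivs_in_Yt: "\<forall>f \<in> Xt_space p ts. \<exists>g\<in>Yt. AE t in lborel. t \<in> {0<..<1} \<longrightarrow> deriv f t = g t"
    and orth: "L2I_orthogonal_basis Yt Mt \<xi>"
    and inv: "\<forall>i<Mt. \<forall>j<Mt. mmul Mt Oinv (\<lambda>i j. l2I (\<xi> j) (\<xi> i)) i j = (if i = j then 1 else 0)"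
  shows "time_discretization Mt \<xi> Oinv Nt \<phi> (set ts)"
proof -
  have Xt: "\<phi> i \<in> Xt_space p ts" if "i < Nt" for i
    using basis that unfolding lagrange_basis_def by blast
  have span: "\<exists>a. AE t in lborel. t \<in> {0<..<1} \<longrightarrow> g t = (\<Sum>j<Mt. a j * \<xi> j t)" if "g \<in> Yt" for g
    using orth that unfolding L2I_orthogonal_basis_def by blast
  have "\<xi> j \<in> L2I" if "j < Mt" for j
    using orth \<open>Yt \<subseteq> L2I\<close> that unfolding L2I_orthogonal_basis_def by blast
  then have "L2I_orthogonal_family Mt \<xi> Oinv"
    using orth inv unfolding L2I_orthogonal_family_def L2I_orthogonal_basis_def L2I_def by blast
  moreover have "time_discretization_axioms Mt \<xi> Nt \<phi> (set ts)"
  proof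
    show "finite (set ts)" by simp
    show "continuous_on {0<..<1} (\<phi> i)" if "i < Nt" for i
      using Xt[OF that] unfolding Xt_space_def by (auto intro: continuous_on_subset)
    show "\<phi> i differentiable (at t)" if "i < Nt" "t \<in> {0<..<1}" "t \<notin> set ts" for i t
      using Xt_space_differentiable[OF part Xt] that by blast
    show "\<exists>a. AE t in lborel. t \<in> {0<..<1} \<longrightarrow> \<phi> i t = (\<Sum>j<Mt. a j * \<xi> j t)" if i: "i < Nt" for i
    proof -
      obtain g where "g \<in> Yt" "AE t in lborel. t \<in> {0<..<1} \<longrightarrow> \<phi> i t = g t"
        using values_in_Yt Xt[OF i] by blast
      with span show ?thesis by (blast intro: AE_in_span_trans)
    qed
    show "\<exists>a. AE t in lborel. t \<in> {0<..<1} \<longrightarrow> deriv (\<phi> i) t = (\<Sum>j<Mt. a j * \<xi> j t)" if i: "i < Nt" for i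
    proof -
      obtain g where "g \<in> Yt" "AE t in lborel. t \<in> {0<..<1} \<longrightarrow> deriv (\<phi> i) t = g t"
        using derivs_in_Yt Xt[OF i] by blast
      with span show ?thesis by (blast intro: AE_in_span_trans)
    qed
  qed
  ultimately show ?thesis by (rule time_discretization.intro)
qed

lemma mpoly_fun_has_directional_derivative:
  fixes q :: "real^'n \<Rightarrow> real"
  assumes "mpoly_fun p q"
  shows "\<exists>q'. continuous_on UNIV q' \<and> (\<forall>x. ((\<lambda>s. q (x + s *\<^sub>R e)) has_real_derivative q' x) (at 0))"
proof -
  obtain a where a: "\<And>x. q x = (\<Sum>\<alpha>\<in>{\<alpha>. sum \<alpha> UNIV \<le> p}. a \<alpha> * (\<Prod>i\<in>UNIV. (x $ i) ^ \<alpha> i))"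
    using assms unfolding mpoly_fun_def by blast
  define q' where "q' x = (\<Sum>\<alpha>\<in>{\<alpha>. sum \<alpha> UNIV \<le> p}. a \<alpha> *
      (\<Sum>i\<in>UNIV. (of_nat (\<alpha> i) * (x $ i) ^ (\<alpha> i - 1) * e $ i) * (\<Prod>j\<in>UNIV - {i}. (x $ j) ^ \<alpha> j)))" for x
  have "continuous_on UNIV q'" unfolding q'_def by (intro continuous_intros)
  moreover have "((\<lambda>s. q (x + s *\<^sub>R e)) has_real_derivative q' x) (at 0)" for x
  proof -
    have "((\<lambda>s. \<Prod>i\<in>UNIV. (x $ i + s * e $ i) ^ \<alpha> i) has_real_derivative
       (\<Sum>i\<in>UNIV. (of_nat (\<alpha> i) * (x $ i) ^ (\<alpha> i - 1) * e $ i) * (\<Prod>j\<in>UNIV - {i}. (x $ j + 0 * e $ j) ^ \<alpha> j))) (at 0)"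
      for \<alpha> :: "'n \<Rightarrow> nat"
      by (rule has_field_derivative_prod) (auto intro!: derivative_eq_intros)
    then show ?thesis
      unfolding a q'_def by (auto intro!: DERIV_sum DERIV_cmult)
  qed
  ultimately show ?thesis by blast
qed

lemma pw_poly_T_has_directional_derivative:
  fixes f :: "real^'n \<Rightarrow> real"
  assumes "pw_poly_T p T f" "K \<in> T"
  shows "\<exists>f'. continuous_on UNIV f' \<and> (\<forall>y\<in>interior K. ((\<lambda>s. f (y + s *\<^sub>R e)) has_real_derivative f' y) (at 0))"
proof -
  obtain q where "mpoly_fun p q" and q: "\<forall>y\<in>interior K. f y = q y"
    using assms unfolding pw_poly_T_def by blast
  then obtain q' where q': "continuous_on UNIV q'" "\<And>x. ((\<lambda>s. q (x + s *\<^sub>R e)) has_real_derivative q' x) (at 0)"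
    using mpoly_fun_has_directional_derivative by blast
  have "((\<lambda>s. f (y + s *\<^sub>R e)) has_real_derivative q' y) (at 0)" if "y \<in> interior K" for y
  proof (rule has_field_derivative_transform_within_open[OF q'(2)])
    show "open ((\<lambda>s. y + s *\<^sub>R e) -` interior K)"
      by (rule continuous_open_vimage) (auto intro!: continuous_intros)
  qed (use that q in auto)
  with q'(1) show ?thesis by blast
qed

lemma finite_uniform_bound:
  assumes "finite A" "\<And>a. a \<in> A \<Longrightarrow> \<exists>C. \<forall>x\<in>S a. \<bar>f a x\<bar> \<le> (C::real)"
  shows "\<exists>C. \<forall>a\<in>A. \<forall>x\<in>S a. \<bar>f a x\<bar> \<le> C"
proof -
  have "bounded (\<Union>a\<in>A. f a ` S a)"
    using assms by (intro bounded_UN) (auto simp: bounded_real)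
  then show ?thesis by (auto simp: bounded_real)
qed

lemma conforming_triangulation_AE_interior:
  fixes \<Omega> :: "(real^'n) set"
  assumes "conforming_triangulation \<Omega> T"
  shows "AE x in lborel. x \<in> closure \<Omega> \<longrightarrow> (\<exists>K\<in>T. x \<in> interior K)"
proof -
  have T: "finite T" "\<And>K. K \<in> T \<Longrightarrow> int CARD('n) simplex K" "\<Union>T = closure \<Omega>"
    using assms unfolding conforming_triangulation_def by auto
  have "AE x in lborel. x \<notin> frontier K" if "K \<in> T" for K
  proof (rule AE_not_in)
    show "frontier K \<in> null_sets lborel"
      using negligible_convex_frontier[OF convex_simplex[OF T(2)[OF that]]]
      by (auto simp: negligible_iff_null_sets null_sets_completion_iff)
  qed
  then have "AE x in lborel. \<forall>K\<in>T. x \<notin> frontier K"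
    using T(1) by (simp add: AE_finite_all)
  then show ?thesis
  proof eventually_elim
    case (elim x)
    have "closure K = K" if "K \<in> T" for K
      using compact_simplex[OF T(2)[OF that]] by (simp add: compact_imp_closed)
    with elim T(3) show ?case unfolding frontier_def by blast
  qed
qed

lemma W1inf_family_Xx_space:
  fixes \<Omega> :: "(real^'d) set"
  assumes bounded: "bounded \<Omega>" and lip: "lipschitz_domain \<Omega>" and tri: "conforming_triangulation \<Omega> T"
    and Xx: "\<forall>l<N. \<psi> l \<in> Xx_space \<Omega> T p"
  shows "W1inf_family \<Omega> N \<psi>"
proof
  have T: "finite T" "\<And>K. K \<in> T \<Longrightarrow> compact K"
    using tri compact_simplex unfolding conforming_triangulation_def by auto
  have cont: "continuous_on (closure \<Omega>) (\<psi> l)" and pw: "pw_poly_T p T (\<psi> l)" if "l < N" for l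
    using Xx that unfolding Xx_space_def by auto
  show "open \<Omega>" using lip unfolding lipschitz_domain_def by blast
  show "bounded \<Omega>" by fact
  show "continuous_on \<Omega> (\<psi> l)" if "l < N" for l
    using cont[OF that] closure_subset continuous_on_subset by blast
  show "\<exists>C. \<forall>x\<in>\<Omega>. \<bar>\<psi> l x\<bar> \<le> C" if "l < N" for l
  proof -
    have "bounded (\<psi> l ` closure \<Omega>)"
      using bounded cont[OF that] by (intro compact_imp_bounded compact_continuous_image) auto
    then show ?thesis using closure_subset by (fastforce simp: bounded_real)
  qed
  have interior_grad: "\<exists>f'. continuous_on UNIV f' \<and>
      (\<forall>y\<in>interior K. ((\<lambda>s. \<psi> l (y + s *\<^sub>R axis i 1)) has_real_derivative f' y) (at 0))"
    if "l < N" "K \<in> T" for l K i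
    using pw_poly_T_has_directional_derivative[OF pw] that by blast
  show "AE x in lborel. x \<in> \<Omega> \<longrightarrow>
      (\<forall>l<N. \<forall>i. ((\<lambda>s. \<psi> l (x + s *\<^sub>R axis i 1)) has_real_derivative grad (\<psi> l) x $ i) (at 0))"
    using conforming_triangulation_AE_interior[OF tri]
  proof eventually_elim
    case (elim x)
    show ?case
    proof (intro impI allI)
      fix l i
      assume "x \<in> \<Omega>" "l < N"
      with elim obtain K where "K \<in> T" "x \<in> interior K" using closure_subset by blast
      with interior_grad[OF \<open>l < N\<close>, of K i]
      obtain d where "((\<lambda>s. \<psi> l (x + s *\<^sub>R axis i 1)) has_real_derivative d) (at 0)" by blast
      with DERIV_imp_deriv[OF this]
      show "((\<lambda>s. \<psi> l (x + s *\<^sub>R axis i 1)) has_real_derivative grad (\<psi> l) x $ i) (at 0)"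
        by (simp add: grad_nth)
    qed
  qed
  show "\<exists>C. AE x in lborel. x \<in> \<Omega> \<longrightarrow> (\<forall>i. \<bar>grad (\<psi> l) x $ i\<bar> \<le> C)" if l: "l < N" for l
  proof -
    have bound: "\<exists>C. \<forall>y\<in>interior K. \<bar>grad (\<psi> l) y $ i\<bar> \<le> C" if K: "K \<in> T" for K i
    proof -
      obtain f' where f': "continuous_on UNIV f'" and
        has_f': "\<And>y. y \<in> interior K \<Longrightarrow> ((\<lambda>s. \<psi> l (y + s *\<^sub>R axis i 1)) has_real_derivative f' y) (at 0)"
        using interior_grad[OF l K] by blast
      have "bounded (f' ` K)"
        using T(2)[OF K] by (intro compact_imp_bounded compact_continuous_image continuous_on_subset[OF f']) auto
      then obtain C where C: "\<forall>y\<in>K. \<bar>f' y\<bar> \<le> C" by (auto simp: bounded_real)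
      have "\<bar>grad (\<psi> l) y $ i\<bar> \<le> C" if "y \<in> interior K" for y
      proof -
        have "grad (\<psi> l) y $ i = f' y" unfolding grad_nth using has_f'[OF that] by (rule DERIV_imp_deriv)
        then show ?thesis using C that interior_subset by auto
      qed
      then show ?thesis by blast
    qed
    have "finite (T \<times> (UNIV :: 'd set))" using T(1) by simp
    then have "\<exists>C. \<forall>Ki\<in>T \<times> UNIV. \<forall>y\<in>interior (fst Ki). \<bar>grad (\<psi> l) y $ snd Ki\<bar> \<le> C"
      by (rule finite_uniform_bound) (use bound in auto)
    then obtain C where C: "\<And>K i y. K \<in> T \<Longrightarrow> y \<in> interior K \<Longrightarrow> \<bar>grad (\<psi> l) y $ i\<bar> \<le> C"
      by fastforce
    have "AE x in lborel. x \<in> \<Omega> \<longrightarrow> (\<forall>i. \<bar>grad (\<psi> l) x $ i\<bar> \<le> C)"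
      using conforming_triangulation_AE_interior[OF tri]
    proof eventually_elim
      case (elim x)
      show ?case
      proof (intro impI allI)
        fix i
        assume "x \<in> \<Omega>"
        with elim obtain K where "K \<in> T" "x \<in> interior K" using closure_subset by blast
        then show "\<bar>grad (\<psi> l) x $ i\<bar> \<le> C" by (rule C)
      qed
    qed
    then show ?thesis ..
  qed
qed

theorem mainTheorem2:
  fixes \<Omega> :: "(real^'d) set" and T :: "(real^'d) set set"
    and D :: "real^'d^'d" and c :: real
    and pt px :: nat and ts :: "real list"
    and Nt Nx Mt :: nat
    and \<phi> :: "nat \<Rightarrow> real \<Rightarrow> real" and \<psi> :: "nat \<Rightarrow> real^'d \<Rightarrow> real"
    and Yt :: "(real \<Rightarrow> real) set" and \<xi> :: "nat \<Rightarrow> real \<Rightarrow> real"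
    and Kx Oinv :: "nat \<Rightarrow> nat \<Rightarrow> real"
  defines "Omat \<equiv> (\<lambda>i j. l2I (\<xi> j) (\<xi> i))"
    and "S \<equiv> (\<lambda>(i, k) (i', k'). Sdelta \<Omega> D c Mt Nx Oinv Kx \<xi> \<psi>
                 (tens (\<phi> i') (\<psi> k')) (tens (\<phi> i) (\<psi> k)))"
    and "L \<equiv> (\<lambda>i j. l2I (deriv (\<phi> j)) (\<phi> i))"
    and "Mt_mat \<equiv> (\<lambda>i j. l2I (\<phi> j) (\<phi> i))"
    and "At \<equiv> (\<lambda>i j. l2I (deriv (\<phi> j)) (deriv (\<phi> i)))"
    and "\<Gamma>0 \<equiv> (\<lambda>i j. \<phi> i 0 * \<phi> j 0)"
    and "Mx \<equiv> (\<lambda>k l. l2O \<Omega> (\<psi> l) (\<psi> k))"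
    and "Ax \<equiv> (\<lambda>k l. aform \<Omega> D c (\<psi> l) (\<psi> k))"
  assumes "bounded \<Omega>" and "lipschitz_domain \<Omega>"
    and "transpose D = D" and "\<forall>x. x \<noteq> 0 \<longrightarrow> x \<bullet> (D *v x) > 0"
    and "c \<ge> 0"
    and "interval_partition ts" and "conforming_triangulation \<Omega> T"
    and "lagrange_basis {0..1} (Xt_space pt ts) Nt \<phi>"
    and "lagrange_basis (closure \<Omega>) (Xx_space \<Omega> T px) Nx \<psi>"
    and "Yt \<subseteq> L2I"
    and "\<forall>f \<in> Xt_space pt ts. \<exists>g\<in>Yt. AE t in lborel. t \<in> {0<..<1} \<longrightarrow> f t = g t"
    and "\<forall>f \<in> Xt_space pt ts. \<exists>g\<in>Yt. AE t in lborel. t \<in> {0<..<1} \<longrightarrow> deriv f t = g t"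
    and "L2I_orthogonal_basis Yt Mt \<xi>"
    and "\<forall>k<Nx. \<forall>l<Nx. Kx k l = Kx l k"
    and "\<forall>v. (\<exists>k<Nx. v k \<noteq> 0) \<longrightarrow> (\<Sum>k<Nx. \<Sum>l<Nx. v k * Kx k l * v l) > 0"
    and "\<forall>i<Mt. \<forall>j<Mt. mmul Mt Omat Oinv i j = (if i = j then 1 else 0)"
    and "\<forall>i<Mt. \<forall>j<Mt. mmul Mt Oinv Omat i j = (if i = j then 1 else 0)"
  shows "\<forall>i<Nt. \<forall>k<Nx. \<forall>i'<Nt. \<forall>k'<Nx.
     S (i, k) (i', k') =
        kron At (mmul Nx (mmul Nx Mx Kx) Mx) (i, k) (i', k')
      + kron Mt_mat (mmul Nx (mmul Nx Ax Kx) Ax) (i, k) (i', k')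
      + kron (mtrans L) (mmul Nx (mmul Nx Mx Kx) Ax) (i, k) (i', k')
      + kron L (mmul Nx (mmul Nx Ax Kx) Mx) (i, k) (i', k')
      + kron \<Gamma>0 Mx (i, k) (i', k')"
proof -
  interpret space_time_discretization \<Omega> Nx \<psi> Mt \<xi> Oinv Nt \<phi> "set ts"
  proof (intro space_time_discretization.intro)
    show "W1inf_family \<Omega> Nx \<psi>"
      using \<open>lagrange_basis (closure \<Omega>) (Xx_space \<Omega> T px) Nx \<psi>\<close> unfolding lagrange_basis_def
      by (intro W1inf_family_Xx_space[OF \<open>bounded \<Omega>\<close> \<open>lipschitz_domain \<Omega>\<close> \<open>conforming_triangulation \<Omega> T\<close>]) blast
    show "time_discretization Mt \<xi> Oinv Nt \<phi> (set ts)"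
      using assms(14,16,18-21,25) unfolding Omat_def by (rule time_discretization_Xt_space)
  qed
  show ?thesis
    unfolding S_def L_def Mt_mat_def At_def \<Gamma>0_def Mx_def Ax_def kron_def mtrans_def
    using Sdelta_tensor[OF _ _ _ _ \<open>transpose D = D\<close>] by simp
qed

end
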